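(* Let real-valued random variables be generated by $$X = qA + E_X,\qquad H = bA + E_H,\qquad Y = cX + dH + E_Y,$$ where $A, E_X, E_H, E_Y$ are mutually independent, $A$ has a density $p_A$, and $q,b,c,d\in\mathbb{R}$ are constants ($H$ is unobserved). Let $E := E_Y + dE_H$, and for constants $\alpha\in\mathbb{R}$ and $\beta\neq 0$ let $\widehat{Y} := \alpha A + \beta X$. Assume $c\neq 0$ and $qc+bd\neq 0$. Assume the densities $p_{E_X}$ and $p_E$ are positive on all of $\mathbb{R}$, and that $f_2:=\log p_{E_X}$ and $f_3:=\log p_E$ are three times differentiable. If at most one of $E_X$ and $E$ is Gaussian, then $\widehat{Y}$ is not conditionally independent of $A$ given $Y$ (for every such choice of $\alpha$ and $\beta\ne 0$).
   Context: Conditional independence of $U$ and $V$ given $W$ is written $U \perp V \mid W$. The statement "$\widehat{Y}\perp A\mid Y$" is the Equalized Odds fairness criterion for the predictor $\widehat{Y}$, the protected feature $A$ and the target $Y$. *)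

theory Defs
  imports "HOL-Probability.Probability"
begin

definition gen_sigma :: "'a measure \<Rightarrow> ('a \<Rightarrow> real) \<Rightarrow> 'a measure" where
  "gen_sigma M W = vimage_algebra (space M) W borel"

definition cond_indep :: "'a measure \<Rightarrow> ('a \<Rightarrow> real) \<Rightarrow> ('a \<Rightarrow> real) \<Rightarrow> ('a \<Rightarrow> real) \<Rightarrow> bool" where
  "cond_indep M U V W \<longleftrightarrow>
     (\<forall>S \<in> sets borel. \<forall>T \<in> sets borel.
        AE \<omega> in M.
          real_cond_exp M (gen_sigma M W) (\<lambda>x. indicator S (U x) * indicator T (V x)) \<omega> =
          real_cond_exp M (gen_sigma M W) (\<lambda>x. indicator S (U x)) \<omega> *
          real_cond_exp M (gen_sigma M W) (\<lambda>x. indicator T (V x)) \<omega>)"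

definition gaussian_rv :: "'a measure \<Rightarrow> ('a \<Rightarrow> real) \<Rightarrow> bool" where
  "gaussian_rv M Z \<longleftrightarrow>
     (\<exists>\<mu> \<sigma>. \<sigma> > 0 \<and> distributed M lborel Z (\<lambda>x. ennreal (normal_density \<mu> \<sigma> x)))"

definition thrice_differentiable :: "(real \<Rightarrow> real) \<Rightarrow> bool" where
  "thrice_differentiable f \<longleftrightarrow> (\<forall>k < 3. \<forall>x. (deriv ^^ k) f differentiable (at x))"

end

theory Submission
  imports Defs
begin

(* Put W = r A + E_X with r = (\<alpha> + \<beta> q) / \<beta>, so that Yhat = \<beta> W and Y = c W + s A + E with
   s = q c + b d - c r; the claim becomes that W and A are not conditionally independent given Y.
   Given Y = y, the pair (A, W) has a density proportional to p_A(a) k(a, w, y) with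
   k(a, w, y) = p_E_X(w - r a) p_E(y - c w - s a).  Conditional independence makes it factorise in
   a and w, hence for almost all a1, a2 the cross-ratio identity
   k(a1, w1, y) k(a2, w2, y) = k(a2, w1, y) k(a1, w2, y) holds, by continuity for all w1, w2, y.
   With f2 = ln p_E_X and f3 = ln p_E, differentiating its logarithm in w1 gives
   f2'(v) - f2'(v + r \<delta>) = c (f3'(x) - f3'(x + s \<delta>)) for \<delta> = a1 - a2.  The \<delta> satisfying this
   form a closed subgroup of the reals containing almost every difference of two independent copies
   of A; as A has a density, the subgroup is uncountable and hence everything.  Then f2' or f3' has
   translation invariant increments and is affine: either one of f2, f3 is affine, which no
   log-density is, or both are quadratic, i.e. E_X and E are both Gaussian. *)

text \<open>The coefficient l is the second derivative of f.\<close>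
definition quadratic_fun :: "real \<Rightarrow> (real \<Rightarrow> real) \<Rightarrow> bool" where
  "quadratic_fun l f \<longleftrightarrow> (\<exists>m n. \<forall>x. f x = l/2 * x^2 + m * x + n)"

lemma thrice_differentiableD:
  assumes "thrice_differentiable f"
  shows "f differentiable (at x)" "deriv f differentiable (at x)"
  using assms[unfolded thrice_differentiable_def, rule_format, of 0 x]
    assms[unfolded thrice_differentiable_def, rule_format, of 1 x]
  by simp_all

lemma differentiable_everywhere_imp_continuous_on:
  fixes f :: "real \<Rightarrow> real"
  assumes "\<And>x. f differentiable (at x)"
  shows "continuous_on S f"
  using assms by (intro differentiable_imp_continuous_on differentiable_at_imp_differentiable_on) auto

lemma continuous_on_if_ln_differentiable:
  fixes p :: "real \<Rightarrow> real"
  assumes "\<And>x. p x > 0" and "\<And>x. (\<lambda>x. ln (p x)) differentiable (at x)"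
  shows "continuous_on S p"
proof -
  have "continuous_on S (\<lambda>x. exp (ln (p x)))"
    by (intro continuous_intros differentiable_everywhere_imp_continuous_on assms(2))
  then show ?thesis using assms(1) by simp
qed

lemma deriv_affine_if_translation_invariant_increments:
  fixes f :: "real \<Rightarrow> real"
  assumes f': "\<And>x. f differentiable (at x)" and f'': "\<And>x. deriv f differentiable (at x)"
    and inv: "\<And>t x y. deriv f (x + t) - deriv f x = deriv f (y + t) - deriv f y"
  shows "\<exists>l m. (\<forall>x. deriv f x = l * x + m) \<and> quadratic_fun l f"
proof -
  define g where "g = deriv f"
  define l where "l = deriv g 0"
  have Df: "(f has_real_derivative g x) (at x)" for x
    unfolding g_def using f' DERIV_deriv_iff_real_differentiable by blast
  have Dg: "(g has_real_derivative deriv g x) (at x)" for x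
    unfolding g_def using f'' DERIV_deriv_iff_real_differentiable by blast
  have g'_const: "deriv g x = l" for x
  proof -
    have const: "(\<lambda>z. g (z + x) - g z) = (\<lambda>z. g (0 + x) - g 0)"
      using inv unfolding g_def by (intro ext) metis
    have "((\<lambda>z. g (z + x)) has_real_derivative deriv g (0 + x) * 1) (at 0)"
      by (rule DERIV_chain2[OF Dg]) (auto intro!: derivative_eq_intros)
    then have "((\<lambda>z. g (z + x) - g z) has_real_derivative deriv g (0 + x) - deriv g 0) (at 0)"
      using DERIV_diff[OF _ Dg[of 0]] by simp
    then have "deriv g (0 + x) - deriv g 0 = 0"
      unfolding const using DERIV_unique DERIV_const by blast
    then show ?thesis unfolding l_def by simp
  qed
  have g: "g x = l * x + g 0" for x
  proof -
    have "((\<lambda>z. g z - l * z) has_real_derivative 0) (at z)" for z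
      using g'_const[of z] by (auto intro!: derivative_eq_intros Dg)
    then show ?thesis using DERIV_isconst_all[of "\<lambda>z. g z - l * z" x 0] by simp
  qed
  have "f x = l/2 * x^2 + g 0 * x + f 0" for x
  proof -
    have "((\<lambda>z. f z - (l/2 * z^2 + g 0 * z)) has_real_derivative 0) (at z)" for z
      using g[of z] by (auto intro!: derivative_eq_intros Df)
    then show ?thesis using DERIV_isconst_all[of "\<lambda>z. f z - (l/2 * z^2 + g 0 * z)" x 0] by simp
  qed
  then show ?thesis using g unfolding quadratic_fun_def g_def by blast
qed

lemma AE_lborel_eq_imp_eq_continuous:
  fixes f g :: "real \<Rightarrow> real"
  assumes ae: "AE x in lborel. f x = g x"
    and "continuous_on UNIV f" "continuous_on UNIV g"
  shows "f x = g x"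
proof (rule ccontr)
  define S where "S = {x. f x \<noteq> g x}"
  assume "f x \<noteq> g x"
  then have "S \<noteq> {}" unfolding S_def by blast
  have "open S" unfolding S_def using assms(2,3) by (rule open_Collect_neq)
  then have "S \<in> null_sets lborel"
    using ae AE_iff_null[of lborel "\<lambda>x. f x = g x"] unfolding S_def by auto
  then have "negligible S"
    using \<open>open S\<close> by (simp add: negligible_iff_null_sets null_sets_completion_iff)
  with \<open>open S\<close> \<open>S \<noteq> {}\<close> show False using open_not_negligible by blast
qed

lemma deriv_increment_identity:
  fixes f2 f3 :: "real \<Rightarrow> real"
  assumes d2: "\<And>x. f2 differentiable (at x)" and d3: "\<And>x. f3 differentiable (at x)"
    and cross: "\<And>y w1 w2. f2 (w1 - r*a1) + f3 (y - c*w1 - s*a1) + (f2 (w2 - r*a2) + f3 (y - c*w2 - s*a2))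
       = f2 (w1 - r*a2) + f3 (y - c*w1 - s*a2) + (f2 (w2 - r*a1) + f3 (y - c*w2 - s*a1))"
  shows "deriv f2 v - deriv f2 (v + r*(a1-a2)) = c * (deriv f3 x - deriv f3 (x + s*(a1-a2)))"
proof -
  define w where "w = v + r*a1"
  define y where "y = x + c*w + s*a1"
  define L where "L = (\<lambda>z. f2 (z - r*a1) + f3 (y - c*z - s*a1) - f2 (z - r*a2) - f3 (y - c*z - s*a2))"
  have XE_density: "(f2 has_real_derivative deriv f2 z) (at z)" for z
    using d2 DERIV_deriv_iff_real_differentiable by blast
  have E_density: "(f3 has_real_derivative deriv f3 z) (at z)" for z
    using d3 DERIV_deriv_iff_real_differentiable by blast
  have "L z = L w" for z
    using cross[of z y w] unfolding L_def by linarith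
  then have "(L has_real_derivative 0) (at w)"
    by (metis DERIV_const ext)
  moreover have "(L has_real_derivative deriv f2 (w - r*a1) * 1 + deriv f3 (y - c*w - s*a1) * (- c)
      - deriv f2 (w - r*a2) * 1 - deriv f3 (y - c*w - s*a2) * (- c)) (at w)"
    unfolding L_def
    by (intro DERIV_diff DERIV_add DERIV_chain2[OF XE_density] DERIV_chain2[OF E_density])
      (auto intro!: derivative_eq_intros)
  ultimately have "0 = deriv f2 (w - r*a1) * 1 + deriv f3 (y - c*w - s*a1) * (- c)
      - deriv f2 (w - r*a2) * 1 - deriv f3 (y - c*w - s*a2) * (- c)"
    by (rule DERIV_unique)
  moreover have "w - r*a1 = v" "y - c*w - s*a1 = x" "w - r*a2 = v + r*(a1-a2)"
    "y - c*w - s*a2 = x + s*(a1-a2)"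
    unfolding w_def y_def by (simp_all add: algebra_simps)
  ultimately show ?thesis by (simp add: algebra_simps)
qed

definition increment_set :: "(real \<Rightarrow> real) \<Rightarrow> (real \<Rightarrow> real) \<Rightarrow> real \<Rightarrow> real \<Rightarrow> real \<Rightarrow> real set" where
  "increment_set f2 f3 r s c =
     {\<delta>. \<forall>v x. deriv f2 v - deriv f2 (v + r*\<delta>) = c * (deriv f3 x - deriv f3 (x + s*\<delta>))}"

lemma zero_in_increment_set: "0 \<in> increment_set f2 f3 r s c"
  by (simp add: increment_set_def)

lemma increment_set_add:
  assumes "\<delta> \<in> increment_set f2 f3 r s c" "\<epsilon> \<in> increment_set f2 f3 r s c"
  shows "\<delta> + \<epsilon> \<in> increment_set f2 f3 r s c"
proof -
  have "deriv f2 v - deriv f2 (v + r*(\<delta>+\<epsilon>)) = c * (deriv f3 x - deriv f3 (x + s*(\<delta>+\<epsilon>)))" for v x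
  proof -
    have "deriv f2 v - deriv f2 (v + r*\<delta>) = c * (deriv f3 x - deriv f3 (x + s*\<delta>))"
      "deriv f2 (v + r*\<delta>) - deriv f2 ((v + r*\<delta>) + r*\<epsilon>) = c * (deriv f3 (x + s*\<delta>) - deriv f3 ((x + s*\<delta>) + s*\<epsilon>))"
      using assms unfolding increment_set_def by blast+
    moreover have "v + r*(\<delta>+\<epsilon>) = (v + r*\<delta>) + r*\<epsilon>" "x + s*(\<delta>+\<epsilon>) = (x + s*\<delta>) + s*\<epsilon>"
      by (simp_all add: algebra_simps)
    ultimately show ?thesis by (simp add: algebra_simps)
  qed
  then show ?thesis unfolding increment_set_def by blast
qed

lemma increment_set_uminus:
  assumes "\<delta> \<in> increment_set f2 f3 r s c"
  shows "- \<delta> \<in> increment_set f2 f3 r s c"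
proof -
  have "deriv f2 (v - r*\<delta>) - deriv f2 ((v - r*\<delta>) + r*\<delta>) = c * (deriv f3 (x - s*\<delta>) - deriv f3 ((x - s*\<delta>) + s*\<delta>))"
    for v x using assms unfolding increment_set_def by blast
  then show ?thesis unfolding increment_set_def by (simp add: algebra_simps)
qed

lemma closed_increment_set:
  assumes "continuous_on UNIV (deriv f2)" "continuous_on UNIV (deriv f3)"
  shows "closed (increment_set f2 f3 r s c)"
proof -
  have "increment_set f2 f3 r s c =
      (\<Inter>v. \<Inter>x. {\<delta>. deriv f2 v - deriv f2 (v + r*\<delta>) = c * (deriv f3 x - deriv f3 (x + s*\<delta>))})"
    unfolding increment_set_def by auto
  moreover have "closed {\<delta>. deriv f2 v - deriv f2 (v + r*\<delta>) = c * (deriv f3 x - deriv f3 (x + s*\<delta>))}" for v x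
    by (intro closed_Collect_eq continuous_intros continuous_on_compose2[OF assms(1)]
        continuous_on_compose2[OF assms(2)]) auto
  ultimately show ?thesis by (simp add: closed_INT)
qed

lemma quadratic_if_increment_set_UNIV:
  fixes f2 f3 :: "real \<Rightarrow> real"
  assumes d2: "\<And>x. f2 differentiable (at x)" "\<And>x. deriv f2 differentiable (at x)"
    and d3: "\<And>x. f3 differentiable (at x)" "\<And>x. deriv f3 differentiable (at x)"
    and "c \<noteq> 0" and "r \<noteq> 0 \<or> s \<noteq> 0"
    and "increment_set f2 f3 r s c = UNIV"
  shows "quadratic_fun 0 f2 \<or> quadratic_fun 0 f3 \<or> (\<exists>l2 l3. quadratic_fun l2 f2 \<and> quadratic_fun l3 f3)"
proof -
  have incr: "deriv f2 v - deriv f2 (v + r*\<delta>) = c * (deriv f3 x - deriv f3 (x + s*\<delta>))" for \<delta> v x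
    using \<open>increment_set f2 f3 r s c = UNIV\<close> unfolding increment_set_def by blast
  have f2_incr: "deriv f2 (x + t) - deriv f2 x = deriv f2 (y + t) - deriv f2 y" if "r \<noteq> 0" for t x y
    using incr[of x "t/r" 0] incr[of y "t/r" 0] that by (simp add: algebra_simps)
  have f3_incr: "deriv f3 (x + t) - deriv f3 x = deriv f3 (y + t) - deriv f3 y" if "s \<noteq> 0" for t x y
  proof -
    have "c * (deriv f3 x - deriv f3 (x + t)) = c * (deriv f3 y - deriv f3 (y + t))"
      using incr[of 0 "t/s" x] incr[of 0 "t/s" y] that by simp
    then have "deriv f3 x - deriv f3 (x + t) = deriv f3 y - deriv f3 (y + t)"
      using \<open>c \<noteq> 0\<close> by simp
    then show ?thesis by (simp add: algebra_simps)
  qed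
  consider "s = 0" | "r = 0" | "r \<noteq> 0" "s \<noteq> 0" using \<open>r \<noteq> 0 \<or> s \<noteq> 0\<close> by blast
  then show ?thesis
  proof cases
    case 1
    then have "r \<noteq> 0" using \<open>r \<noteq> 0 \<or> s \<noteq> 0\<close> by simp
    obtain l m where "\<forall>x. deriv f2 x = l * x + m" "quadratic_fun l f2"
      using deriv_affine_if_translation_invariant_increments[OF d2 f2_incr[OF \<open>r \<noteq> 0\<close>]] by blast
    moreover from this have "l * r = 0" using incr[of 0 1 0] 1 by simp
    ultimately show ?thesis using \<open>r \<noteq> 0\<close> by auto
  next
    case 2
    then have "s \<noteq> 0" using \<open>r \<noteq> 0 \<or> s \<noteq> 0\<close> by simp
    obtain l m where "\<forall>x. deriv f3 x = l * x + m" "quadratic_fun l f3"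
      using deriv_affine_if_translation_invariant_increments[OF d3 f3_incr[OF \<open>s \<noteq> 0\<close>]] by blast
    moreover from this have "l * s = 0" using incr[of 0 1 0] 2 \<open>c \<noteq> 0\<close> by simp
    ultimately show ?thesis using \<open>s \<noteq> 0\<close> by auto
  next
    case 3
    then show ?thesis
      using deriv_affine_if_translation_invariant_increments[OF d2 f2_incr]
        deriv_affine_if_translation_invariant_increments[OF d3 f3_incr] by blast
  qed
qed

lemma density_integral_eq_1:
  assumes "prob_space M" "distributed M lborel Z p"
  shows "(\<integral>\<^sup>+x. p x \<partial>lborel) = 1"
proof -
  interpret prob_space M by fact
  have "emeasure (distr M lborel Z) UNIV = 1"
    using distributed_measurable[OF assms(2)] by (simp add: emeasure_distr emeasure_space_1)
  then show ?thesis
    using distributed_borel_measurable[OF assms(2)]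
    by (simp add: distributed_distr_eq_density[OF assms(2)] emeasure_density)
qed

lemma nn_integral_exp_quadratic_finite_imp_neg:
  assumes "(\<integral>\<^sup>+x. ennreal (exp (l/2 * x^2 + m * x + n)) \<partial>lborel) \<noteq> \<infinity>"
  shows "l < 0"
proof (rule ccontr)
  assume "\<not> l < 0"
  \<comment> \<open>for l \<ge> 0 the integrand is at least exp n on a half-line\<close>
  define S :: "real set" where "S = (if m \<ge> 0 then {0..} else {..0})"
  have bound: "exp n \<le> exp (l/2 * x^2 + m * x + n)" if "x \<in> S" for x
  proof -
    have "0 \<le> m * x" using that by (simp add: S_def zero_le_mult_iff split: if_splits)
    moreover have "0 \<le> l/2 * x^2" using \<open>\<not> l < 0\<close> by simp
    ultimately show ?thesis by simp
  qed
  obtain B where B: "(\<integral>\<^sup>+x. ennreal (exp (l/2 * x^2 + m * x + n)) \<partial>lborel) = ennreal B" "0 \<le> B"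
    using assms by (cases "\<integral>\<^sup>+x. ennreal (exp (l/2 * x^2 + m * x + n)) \<partial>lborel") auto
  have "exp n * real N \<le> B" for N :: nat
  proof -
    define I where "I = (if m \<ge> 0 then {0..real N} else {-real N..0})"
    have "I \<subseteq> S" unfolding I_def S_def by auto
    have "ennreal (exp n * real N) = (\<integral>\<^sup>+x. ennreal (exp n) * indicator I x \<partial>lborel)"
      unfolding I_def by (auto simp: nn_integral_cmult_indicator ennreal_mult)
    also have "\<dots> \<le> (\<integral>\<^sup>+x. ennreal (exp (l/2 * x^2 + m * x + n)) \<partial>lborel)"
      using \<open>I \<subseteq> S\<close> bound by (intro nn_integral_mono) (auto split: split_indicator intro!: ennreal_leI)
    finally show ?thesis using B by (auto simp: ennreal_le_iff2)
  qed
  moreover obtain N :: nat where "real N > B / exp n" using reals_Archimedean2 by blast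
  then have "exp n * real N > B" by (simp add: field_simps)
  ultimately show False using not_le by blast
qed

lemma quadratic_log_density_gaussian:
  assumes M: "prob_space M" and D: "distributed M lborel Z (\<lambda>x. ennreal (p x))"
    and pos: "\<And>x. p x > 0" and quad: "quadratic_fun l (\<lambda>x. ln (p x))"
  shows "l < 0" "gaussian_rv M Z"
proof -
  obtain m n where "\<And>x. ln (p x) = l/2 * x^2 + m * x + n"
    using quad unfolding quadratic_fun_def by blast
  then have p: "p x = exp (l/2 * x^2 + m * x + n)" for x
    using pos by (metis exp_ln)
  have total: "(\<integral>\<^sup>+x. ennreal (p x) \<partial>lborel) = 1"
    using density_integral_eq_1[OF M D] .
  then show "l < 0"
    using nn_integral_exp_quadratic_finite_imp_neg[of l m n] unfolding p by simp
  define \<sigma> where "\<sigma> = sqrt (-1/l)"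
  define \<mu> where "\<mu> = -m/l"
  define K where "K = exp (n - m^2/(2*l)) * sqrt (2*pi * \<sigma>^2)"
  have "0 < -1/l" using \<open>l < 0\<close> by (simp add: field_simps)
  then have "\<sigma> > 0" "\<sigma>^2 = -1/l" unfolding \<sigma>_def by simp_all
  \<comment> \<open>completing the square\<close>
  have pK: "p x = K * normal_density \<mu> \<sigma> x" for x
  proof -
    have "-((x - \<mu>)^2) / (2 * \<sigma>^2) = l/2 * x^2 + m * x + n - (n - m^2/(2*l))"
      unfolding \<open>\<sigma>^2 = -1/l\<close> \<mu>_def using \<open>l < 0\<close> by (simp add: field_simps power2_eq_square)
    then have "exp (l/2 * x^2 + m * x + n) = exp (n - m^2/(2*l)) * exp (-((x - \<mu>)^2) / (2 * \<sigma>^2))"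
      by (simp add: exp_add[symmetric])
    then show ?thesis
      using \<open>\<sigma> > 0\<close> unfolding p K_def normal_density_def by (simp add: field_simps)
  qed
  have "K > 0" unfolding K_def using \<open>\<sigma> > 0\<close> by simp
  interpret N: prob_space "density lborel (normal_density \<mu> \<sigma>)"
    using \<open>\<sigma> > 0\<close> by (rule prob_space_normal_density)
  have "(\<integral>\<^sup>+x. ennreal (p x) \<partial>lborel) = ennreal K * (\<integral>\<^sup>+x. ennreal (normal_density \<mu> \<sigma> x) \<partial>lborel)"
    unfolding pK using \<open>K > 0\<close> by (subst nn_integral_cmult[symmetric]) (auto simp: ennreal_mult)
  also have "(\<integral>\<^sup>+x. ennreal (normal_density \<mu> \<sigma> x) \<partial>lborel) = 1"
    using N.emeasure_space_1 by (simp add: emeasure_density)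
  finally have "K = 1" using total \<open>K > 0\<close> by simp
  then have "distributed M lborel Z (\<lambda>x. ennreal (normal_density \<mu> \<sigma> x))"
    using D pK by simp
  then show "gaussian_rv M Z" using \<open>\<sigma> > 0\<close> unfolding gaussian_rv_def by blast
qed

lemma int_mult_mem_additive_subgroup:
  fixes G :: "real set"
  assumes "0 \<in> G" and add: "\<And>x y. x \<in> G \<Longrightarrow> y \<in> G \<Longrightarrow> x + y \<in> G"
    and neg: "\<And>x. x \<in> G \<Longrightarrow> -x \<in> G" and "g \<in> G"
  shows "of_int n * g \<in> G"
proof -
  have nat: "real k * g \<in> G" for k :: nat
  proof (induction k)
    case (Suc k)
    then show ?case using add[OF Suc.IH \<open>g \<in> G\<close>] by (simp add: distrib_right add.commute)
  qed (simp add: \<open>0 \<in> G\<close>)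
  show ?thesis
  proof (cases "n \<ge> 0")
    case True
    then show ?thesis using nat[of "nat n"] by simp
  next
    case False
    then show ?thesis using neg[OF nat[of "nat (-n)"]] by simp
  qed
qed

lemma closed_additive_subgroup_UNIV_or_countable:
  fixes G :: "real set"
  assumes zero: "0 \<in> G" and add: "\<And>x y. x \<in> G \<Longrightarrow> y \<in> G \<Longrightarrow> x + y \<in> G"
    and neg: "\<And>x. x \<in> G \<Longrightarrow> -x \<in> G" and "closed G"
  shows "G = UNIV \<or> countable G"
proof (cases "\<forall>e>0. \<exists>g\<in>G. 0 < g \<and> g < e")
  case True
  have "x \<in> G" for x
  proof (rule closed_approachable[OF \<open>closed G\<close>, THEN iffD1], intro allI impI)
    fix e :: real assume "e > 0"
    then obtain g where g: "g \<in> G" "0 < g" "g < e" using True by blast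
    define n where "n = \<lfloor>x / g\<rfloor>"
    have "of_int n * g \<in> G" using int_mult_mem_additive_subgroup[OF zero add neg g(1)] by blast
    moreover have "of_int n \<le> x / g" "x / g < of_int n + 1" unfolding n_def by linarith+
    then have "of_int n * g \<le> x" "x < of_int n * g + g"
      using g(2) by (simp_all add: pos_le_divide_eq pos_divide_less_eq distrib_right)
    then have "dist (of_int n * g) x < e" using g(3) unfolding dist_real_def by linarith
    ultimately show "\<exists>y\<in>G. dist y x < e" by blast
  qed
  then show ?thesis by auto
next
  case False
  \<comment> \<open>a gap (0, e) makes x \<mapsto> \<lfloor>x / e\<rfloor> injective on G\<close>
  then obtain e where e: "e > 0" "\<And>g. g \<in> G \<Longrightarrow> \<not> (0 < g \<and> g < e)" by auto
  have "inj_on (\<lambda>x. \<lfloor>x / e\<rfloor>) G"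
  proof (rule inj_onI)
    fix x y assume xy: "x \<in> G" "y \<in> G" "\<lfloor>x / e\<rfloor> = \<lfloor>y / e\<rfloor>"
    then have "x / e - y / e < 1" "y / e - x / e < 1" by linarith+
    then have "x - y < e" "y - x < e" using e(1) by (simp_all add: diff_divide_distrib[symmetric] pos_divide_less_eq)
    moreover have "x - y \<in> G" "y - x \<in> G" using add[OF xy(1) neg[OF xy(2)]] add[OF xy(2) neg[OF xy(1)]] by simp_all
    ultimately show "x = y" using e(2) by (metis linorder_neqE_linordered_idom diff_gt_0_iff_gt)
  qed
  then have "countable G" by (rule countable_image_inj_on[OF countableI_type])
  then show ?thesis by simp
qed

lemma closed_additive_subgroup_eq_UNIV_if_AE_differences:
  fixes G :: "real set" and N :: "real measure"
  assumes N: "prob_space N" "sets N = sets borel" and atomless: "\<And>x. emeasure N {x} = 0"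
    and subgroup: "0 \<in> G" "\<And>x y. x \<in> G \<Longrightarrow> y \<in> G \<Longrightarrow> x + y \<in> G" "\<And>x. x \<in> G \<Longrightarrow> -x \<in> G"
    and "closed G" and ae: "AE a1 in N. AE a2 in N. a1 - a2 \<in> G"
  shows "G = UNIV"
proof (rule ccontr)
  assume "G \<noteq> UNIV"
  then have "countable G"
    using closed_additive_subgroup_UNIV_or_countable[OF subgroup \<open>closed G\<close>] by blast
  have "AE a1 in N. False" using ae
  proof (rule eventually_mono)
    fix a1 assume "AE a2 in N. a1 - a2 \<in> G"
    moreover have "AE a2 in N. a2 \<notin> (\<lambda>g. a1 - g) ` G"
      by (rule AE_discrete_difference) (use \<open>countable G\<close> atomless N(2) in auto)
    ultimately have "AE a2 in N. False" by eventually_elim force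
    then show False using prob_space.AE_False[OF N(1)] by simp
  qed
  then show False using prob_space.AE_False[OF N(1)] by simp
qed

lemma (in prob_space) indep_vars_distr_pair_restrict:
  fixes X :: "'i \<Rightarrow> 'a \<Rightarrow> real"
  assumes ind: "indep_vars (\<lambda>_. borel) X I" and JL: "J \<inter> L = {}" "J \<subseteq> I" "L \<subseteq> I"
    and F: "F \<in> measurable (PiM J (\<lambda>_. borel)) N1" and G: "G \<in> measurable (PiM L (\<lambda>_. borel)) N2"
  shows "distr M (N1 \<Otimes>\<^sub>M N2) (\<lambda>\<omega>. (F (restrict (\<lambda>i. X i \<omega>) J), G (restrict (\<lambda>i. X i \<omega>) L))) =
    distr M N1 (\<lambda>\<omega>. F (restrict (\<lambda>i. X i \<omega>) J)) \<Otimes>\<^sub>M distr M N2 (\<lambda>\<omega>. G (restrict (\<lambda>i. X i \<omega>) L))"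
proof -
  define rJ where "rJ = (\<lambda>\<omega>. restrict (\<lambda>i. X i \<omega>) J)"
  define rL where "rL = (\<lambda>\<omega>. restrict (\<lambda>i. X i \<omega>) L)"
  have iv: "indep_var (PiM J (\<lambda>_. borel)) rJ (PiM L (\<lambda>_. borel)) rL"
    unfolding rJ_def rL_def by (rule indep_var_restrict[OF ind JL])
  have rJm: "rJ \<in> measurable M (PiM J (\<lambda>_. borel))" using iv by (rule indep_var_rv1)
  have rLm: "rL \<in> measurable M (PiM L (\<lambda>_. borel))" using iv by (rule indep_var_rv2)
  have D: "distr M (PiM J (\<lambda>_. borel)) rJ \<Otimes>\<^sub>M distr M (PiM L (\<lambda>_. borel)) rL =
      distr M (PiM J (\<lambda>_. borel) \<Otimes>\<^sub>M PiM L (\<lambda>_. borel)) (\<lambda>x. (rJ x, rL x))"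
    using iv unfolding indep_var_distribution_eq by simp
  have pm: "(\<lambda>x. (rJ x, rL x)) \<in> measurable M (PiM J (\<lambda>_. borel) \<Otimes>\<^sub>M PiM L (\<lambda>_. borel))"
    using rJm rLm by (rule measurable_Pair)
  have FG: "(\<lambda>(x, y). (F x, G y)) \<in> measurable (PiM J (\<lambda>_. borel) \<Otimes>\<^sub>M PiM L (\<lambda>_. borel)) (N1 \<Otimes>\<^sub>M N2)"
    using F G by measurable
  have "distr M (N1 \<Otimes>\<^sub>M N2) (\<lambda>\<omega>. (F (rJ \<omega>), G (rL \<omega>))) =
      distr (distr M (PiM J (\<lambda>_. borel) \<Otimes>\<^sub>M PiM L (\<lambda>_. borel)) (\<lambda>x. (rJ x, rL x))) (N1 \<Otimes>\<^sub>M N2) (\<lambda>(x, y). (F x, G y))"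
    by (subst distr_distr[OF FG pm]) (simp add: comp_def)
  also have "\<dots> = distr (distr M (PiM J (\<lambda>_. borel)) rJ \<Otimes>\<^sub>M distr M (PiM L (\<lambda>_. borel)) rL) (N1 \<Otimes>\<^sub>M N2) (\<lambda>(x, y). (F x, G y))"
    unfolding D ..
  also have "\<dots> = distr (distr M (PiM J (\<lambda>_. borel)) rJ) N1 F \<Otimes>\<^sub>M distr (distr M (PiM L (\<lambda>_. borel)) rL) N2 G"
  proof (rule pair_measure_distr[symmetric])
    show "F \<in> measurable (distr M (PiM J (\<lambda>_. borel)) rJ) N1" using F by simp
    show "G \<in> measurable (distr M (PiM L (\<lambda>_. borel)) rL) N2" using G by simp
    have p1: "prob_space (distr M (PiM L (\<lambda>_. borel)) rL)" by (rule prob_space_distr[OF rLm])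
    have "prob_space (distr (distr M (PiM L (\<lambda>_. borel)) rL) N2 G)"
      by (rule prob_space.prob_space_distr[OF p1]) (use G in simp)
    then show "sigma_finite_measure (distr (distr M (PiM L (\<lambda>_. borel)) rL) N2 G)"
      by (simp add: prob_space_imp_sigma_finite)
  qed
  also have "\<dots> = distr M N1 (\<lambda>\<omega>. F (rJ \<omega>)) \<Otimes>\<^sub>M distr M N2 (\<lambda>\<omega>. G (rL \<omega>))"
    by (simp add: distr_distr[OF F rJm] distr_distr[OF G rLm] comp_def)
  finally show ?thesis unfolding rJ_def rL_def .
qed

lemma nn_integral_lborel_translate:
  fixes f :: "real \<Rightarrow> ennreal"
  assumes [measurable]: "f \<in> borel_measurable borel"
  shows "(\<integral>\<^sup>+x. f (t + x) \<partial>lborel) = (\<integral>\<^sup>+x. f x \<partial>lborel)"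
  using nn_integral_real_affine[of f 1 t] by simp

lemma sets_borel_eq_sigma_Rats_Ioi: "sets (borel :: real measure) = sigma_sets UNIV ((\<lambda>q. {q<..}) ` \<rat>)"
proof -
  have b: "sets (borel :: real measure) = sigma_sets UNIV (range greaterThan)"
    by (subst borel_Ioi) simp
  have "sigma_sets UNIV (range greaterThan) = sigma_sets (UNIV::real set) ((\<lambda>q. {q<..}) ` \<rat>)"
  proof
    show "sigma_sets UNIV ((\<lambda>q. {q<..}) ` \<rat>) \<subseteq> sigma_sets (UNIV::real set) (range greaterThan)"
      by (rule sigma_sets_mono') auto
    show "sigma_sets UNIV (range greaterThan) \<subseteq> sigma_sets (UNIV::real set) ((\<lambda>q. {q<..}) ` \<rat>)"
    proof (rule sigma_sets_mono, safe)
      fix x :: real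
      have eq: "{x<..} = \<Union> ((\<lambda>q. {q<..}) ` {q\<in>\<rat>. x < q})"
      proof
        show "{x<..} \<subseteq> \<Union> ((\<lambda>q. {q<..}) ` {q\<in>\<rat>. x < q})"
        proof
          fix z assume "z \<in> {x<..}"
          then obtain q where "q \<in> \<rat>" "x < q" "q < z" using Rats_dense_in_real[of x z] by auto
          then show "z \<in> \<Union> ((\<lambda>q. {q<..}) ` {q\<in>\<rat>. x < q})" by auto
        qed
      qed auto
      have "\<Union> ((\<lambda>q. {q<..}) ` {q\<in>\<rat>. x < q}) \<in> sigma_sets UNIV ((\<lambda>q. {q<..}) ` \<rat>)"
      proof (rule sigma_sets_UNION)
        show "countable ((\<lambda>q. {q<..}) ` {q\<in>\<rat>. x < q})"
          by (rule countable_image) (rule countable_subset[OF _ countable_rat], auto)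
      qed auto
      then show "greaterThan x \<in> sigma_sets UNIV ((\<lambda>q. {q<..}) ` \<rat>)"
        using eq by (simp add: greaterThan_def)
    qed
  qed
  then show ?thesis using b by simp
qed

lemma measure_eqI_Rats_Ioi:
  fixes N1 N2 :: "real measure"
  assumes s1: "sets N1 = sets borel" and s2: "sets N2 = sets borel"
    and eq: "\<And>q. q \<in> \<rat> \<Longrightarrow> emeasure N1 {q<..} = emeasure N2 {q<..}"
    and fin: "\<And>q. q \<in> \<rat> \<Longrightarrow> emeasure N1 {q<..} \<noteq> \<infinity>"
  shows "N1 = N2"
proof (rule measure_eqI_generator_eq_countable[where E="(\<lambda>q. {q<..}) ` \<rat>" and A="(\<lambda>q. {q<..}) ` \<rat>" and \<Omega>=UNIV])
  have I: "{p<..} \<inter> {q<..} \<in> (\<lambda>q. {q<..}) ` \<rat>" if "p \<in> \<rat>" "q \<in> \<rat>" for p q :: real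
  proof -
    have "{p<..} \<inter> {q<..} = {max p q<..}" by auto
    moreover have "max p q \<in> \<rat>" using that by (simp add: max_def)
    ultimately show ?thesis by blast
  qed
  show "Int_stable ((\<lambda>q::real. {q<..}) ` \<rat>)"
    unfolding Int_stable_def using I by blast
  show "sets N1 = sigma_sets UNIV ((\<lambda>q. {q<..}) ` \<rat>)" using s1 sets_borel_eq_sigma_Rats_Ioi by simp
  show "sets N2 = sigma_sets UNIV ((\<lambda>q. {q<..}) ` \<rat>)" using s2 sets_borel_eq_sigma_Rats_Ioi by simp
  show "\<Union> ((\<lambda>q. {q<..}) ` \<rat>) = (UNIV::real set)"
  proof -
    have "z \<in> \<Union> ((\<lambda>q. {q<..}) ` \<rat>)" for z :: real
      using Rats_dense_in_real[of "z - 1" z] by auto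
    then show ?thesis by auto
  qed
qed (use eq fin countable_rat in auto)

lemma integral_eq_if_nn_integral_eq:
  fixes u v :: "'a \<Rightarrow> real"
  assumes [measurable]: "u \<in> borel_measurable M" "v \<in> borel_measurable M"
    and "\<And>x. 0 \<le> u x" "\<And>x. 0 \<le> v x"
    and "(\<integral>\<^sup>+x. ennreal (u x) \<partial>M) = (\<integral>\<^sup>+x. ennreal (v x) \<partial>M)"
  shows "integral\<^sup>L M u = integral\<^sup>L M v"
  using assms by (simp add: integral_eq_nn_integral)

lemma AE_eq_if_nn_integral_Rats_Ioi_eq:
  fixes N :: "real measure" and f g :: "real \<Rightarrow> ennreal"
  assumes "sigma_finite_measure N" "sets N = sets borel"
    and [measurable]: "f \<in> borel_measurable N" "g \<in> borel_measurable N"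
    and eq: "\<And>q. q \<in> \<rat> \<Longrightarrow> (\<integral>\<^sup>+x. f x * indicator {q<..} x \<partial>N) = (\<integral>\<^sup>+x. g x * indicator {q<..} x \<partial>N)"
    and fin: "\<And>q. q \<in> \<rat> \<Longrightarrow> (\<integral>\<^sup>+x. f x * indicator {q<..} x \<partial>N) \<noteq> \<infinity>"
  shows "AE x in N. f x = g x"
proof -
  have "density N f = density N g"
    by (rule measure_eqI_Rats_Ioi) (use eq fin assms(2) in \<open>auto simp: emeasure_density\<close>)
  then show ?thesis using sigma_finite_measure.density_unique[OF assms(1)] by auto
qed

lemma sets_Collect_AE_pair:
  assumes L: "sigma_finite_measure L"
    and P: "{x \<in> space (N \<Otimes>\<^sub>M L). P (fst x) (snd x)} \<in> sets (N \<Otimes>\<^sub>M L)"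
  shows "{x \<in> space N. AE y in L. P x y} \<in> sets N"
proof -
  define Q where "Q = space (N \<Otimes>\<^sub>M L) - {x \<in> space (N \<Otimes>\<^sub>M L). P (fst x) (snd x)}"
  have Q: "Q \<in> sets (N \<Otimes>\<^sub>M L)" unfolding Q_def using P by auto
  have f: "(\<lambda>x. emeasure L (Pair x -` Q)) \<in> borel_measurable N"
    using sigma_finite_measure.measurable_emeasure_Pair[OF L Q] .
  have eq: "{x \<in> space N. AE y in L. P x y} = (\<lambda>x. emeasure L (Pair x -` Q)) -` {0} \<inter> space N"
  proof (intro set_eqI iffI)
    fix x assume x: "x \<in> {x \<in> space N. AE y in L. P x y}"
    then have xs: "x \<in> space N" by simp
    have s: "{y \<in> space L. \<not> P x y} = Pair x -` Q" using xs unfolding Q_def by (auto simp: space_pair_measure)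
    have "emeasure L (Pair x -` Q) = 0"
      using x AE_iff_measurable[OF sets_Pair1[OF Q] s] by simp
    then show "x \<in> (\<lambda>x. emeasure L (Pair x -` Q)) -` {0} \<inter> space N" using xs by simp
  next
    fix x assume x: "x \<in> (\<lambda>x. emeasure L (Pair x -` Q)) -` {0} \<inter> space N"
    then have xs: "x \<in> space N" by simp
    have s: "{y \<in> space L. \<not> P x y} = Pair x -` Q" using xs unfolding Q_def by (auto simp: space_pair_measure)
    have "AE y in L. P x y"
      using x AE_iff_measurable[OF sets_Pair1[OF Q] s] by simp
    then show "x \<in> {x \<in> space N. AE y in L. P x y}" using xs by simp
  qed
  show ?thesis unfolding eq by (rule measurable_sets[OF f]) simp
qed

locale noise_model = prob_space M for M :: "'a measure" +
  fixes A XE E W Y :: "'a \<Rightarrow> real" and p2 p3 :: "real \<Rightarrow> real" and r s c :: real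
  assumes A_measurable[measurable]: "A \<in> borel_measurable M"
    and indep_A_XE_E: "distr M (borel \<Otimes>\<^sub>M (borel \<Otimes>\<^sub>M borel)) (\<lambda>\<omega>. (A \<omega>, XE \<omega>, E \<omega>)) =
       distr M borel A \<Otimes>\<^sub>M (density lborel (\<lambda>x. ennreal (p2 x)) \<Otimes>\<^sub>M density lborel (\<lambda>x. ennreal (p3 x)))"
    and XE_density: "distributed M lborel XE (\<lambda>x. ennreal (p2 x))"
    and E_density: "distributed M lborel E (\<lambda>x. ennreal (p3 x))"
    and p2pos: "\<And>x. p2 x > 0" and p3pos: "\<And>x. p3 x > 0"
    and continuous_p2: "continuous_on UNIV p2" and continuous_p3: "continuous_on UNIV p3"
    and c0: "c \<noteq> 0"
    and W_eq: "\<And>\<omega>. \<omega> \<in> space M \<Longrightarrow> W \<omega> = r * A \<omega> + XE \<omega>"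
    and Y_eq: "\<And>\<omega>. \<omega> \<in> space M \<Longrightarrow> Y \<omega> = c * W \<omega> + s * A \<omega> + E \<omega>"
begin

definition law_A :: "real measure" where
  "law_A = distr M borel A"

text \<open>The joint density of (W, Y) at (w, y) given A = a.\<close>
definition K :: "real \<Rightarrow> real \<Rightarrow> real \<Rightarrow> ennreal" where
  "K a w y = ennreal (p2 (w - r*a) * p3 (y - c*w - s*a))"

lemma p2_measurable[measurable]: "p2 \<in> borel_measurable borel"
  using continuous_p2 by (rule borel_measurable_continuous_onI)

lemma p3_measurable[measurable]: "p3 \<in> borel_measurable borel"
  using continuous_p3 by (rule borel_measurable_continuous_onI)

lemma XE_measurable[measurable]: "XE \<in> borel_measurable M"
  using distributed_measurable[OF XE_density] by (simp add: measurable_cong_sets[OF refl sets_lborel])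

lemma E_measurable[measurable]: "E \<in> borel_measurable M"
  using distributed_measurable[OF E_density] by (simp add: measurable_cong_sets[OF refl sets_lborel])

lemma W_measurable[measurable]: "W \<in> borel_measurable M"
  using measurable_cong[of M W "\<lambda>\<omega>. r * A \<omega> + XE \<omega>"] W_eq by simp

lemma Y_measurable[measurable]: "Y \<in> borel_measurable M"
proof -
  have "(\<lambda>\<omega>. c * W \<omega> + s * A \<omega> + E \<omega>) \<in> borel_measurable M" by measurable
  then show ?thesis using measurable_cong[of M Y "\<lambda>\<omega>. c * W \<omega> + s * A \<omega> + E \<omega>"] Y_eq by simp
qed

lemma K_measurable[measurable (raw)]:
  assumes "f \<in> borel_measurable N" "g \<in> borel_measurable N" "h \<in> borel_measurable N"
  shows "(\<lambda>x. K (f x) (g x) (h x)) \<in> borel_measurable N"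
  unfolding K_def using assms by measurable

lemma prob_space_law_A: "prob_space law_A" unfolding law_A_def by (rule prob_space_distr) simp

interpretation law_A: prob_space law_A by (rule prob_space_law_A)

lemma sets_law_A[simp, measurable_cong]: "sets law_A = sets borel" unfolding law_A_def by simp
lemma space_law_A[simp]: "space law_A = UNIV" unfolding law_A_def by simp

lemma pair_sigma_finite_law_A_lborel: "pair_sigma_finite law_A lborel"
  by (simp add: pair_sigma_finite_def lborel.sigma_finite_measure_axioms law_A.sigma_finite_measure_axioms)

lemma pair_sigma_finite_lborel_law_A: "pair_sigma_finite lborel law_A"
  by (simp add: pair_sigma_finite_def lborel.sigma_finite_measure_axioms law_A.sigma_finite_measure_axioms)

lemma distr_XE_eq_density: "distr M borel XE = density lborel (\<lambda>x. ennreal (p2 x))"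
proof -
  have "distr M borel XE = distr M lborel XE" by (rule distr_cong) auto
  then show ?thesis using distributed_distr_eq_density[OF XE_density] by simp
qed

lemma distr_E_eq_density: "distr M borel E = density lborel (\<lambda>x. ennreal (p3 x))"
proof -
  have "distr M borel E = distr M lborel E" by (rule distr_cong) auto
  then show ?thesis using distributed_distr_eq_density[OF E_density] by simp
qed

lemma nn_integral_A_XE_E:
  assumes g[measurable]: "g \<in> borel_measurable (borel \<Otimes>\<^sub>M (borel \<Otimes>\<^sub>M borel))"
  shows "(\<integral>\<^sup>+\<omega>. g (A \<omega>, XE \<omega>, E \<omega>) \<partial>M) =
    (\<integral>\<^sup>+a. \<integral>\<^sup>+e. \<integral>\<^sup>+z. ennreal (p2 e) * ennreal (p3 z) * g (a, e, z) \<partial>lborel \<partial>lborel \<partial>law_A)"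
proof -
  define P2 where "P2 = density lborel (\<lambda>x. ennreal (p2 x))"
  define P3 where "P3 = density lborel (\<lambda>x. ennreal (p3 x))"
  have sP2[measurable_cong]: "sets P2 = sets borel" unfolding P2_def by simp
  have sP3[measurable_cong]: "sets P3 = sets borel" unfolding P3_def by simp
  interpret P2: prob_space P2 unfolding P2_def distr_XE_eq_density[symmetric] by (rule prob_space_distr) simp
  interpret P3: prob_space P3 unfolding P3_def distr_E_eq_density[symmetric] by (rule prob_space_distr) simp
  have ind1: "distr M (borel \<Otimes>\<^sub>M (borel \<Otimes>\<^sub>M borel)) (\<lambda>\<omega>. (A \<omega>, XE \<omega>, E \<omega>))
      = law_A \<Otimes>\<^sub>M (P2 \<Otimes>\<^sub>M P3)"
    using indep_A_XE_E unfolding law_A_def P2_def P3_def .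
  interpret P23: prob_space "P2 \<Otimes>\<^sub>M P3"
    by (rule prob_space_pair) unfold_locales
  have "(\<integral>\<^sup>+\<omega>. g (A \<omega>, XE \<omega>, E \<omega>) \<partial>M) =
      (\<integral>\<^sup>+x. g x \<partial>distr M (borel \<Otimes>\<^sub>M (borel \<Otimes>\<^sub>M borel)) (\<lambda>\<omega>. (A \<omega>, XE \<omega>, E \<omega>)))"
    by (subst nn_integral_distr) auto
  also have "\<dots> = (\<integral>\<^sup>+x. g x \<partial>(law_A \<Otimes>\<^sub>M (P2 \<Otimes>\<^sub>M P3)))"
    unfolding ind1 ..
  also have "\<dots> = (\<integral>\<^sup>+a. \<integral>\<^sup>+v. g (a, v) \<partial>(P2 \<Otimes>\<^sub>M P3) \<partial>law_A)"
    by (subst P23.nn_integral_fst[symmetric]) auto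
  also have "\<dots> = (\<integral>\<^sup>+a. \<integral>\<^sup>+e. \<integral>\<^sup>+z. g (a, e, z) \<partial>P3 \<partial>P2 \<partial>law_A)"
    by (intro nn_integral_cong, subst P3.nn_integral_fst[symmetric]) auto
  also have "\<dots> = (\<integral>\<^sup>+a. \<integral>\<^sup>+e. \<integral>\<^sup>+z. ennreal (p2 e) * ennreal (p3 z) * g (a, e, z) \<partial>lborel \<partial>lborel \<partial>law_A)"
  proof (intro nn_integral_cong)
    fix a
    have "(\<integral>\<^sup>+e. \<integral>\<^sup>+z. g (a, e, z) \<partial>P3 \<partial>P2) = (\<integral>\<^sup>+e. ennreal (p2 e) * \<integral>\<^sup>+z. ennreal (p3 z) * g (a, e, z) \<partial>lborel \<partial>lborel)"
      unfolding P2_def P3_def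
      by (subst nn_integral_density; (subst nn_integral_density)?) auto
    also have "\<dots> = (\<integral>\<^sup>+e. \<integral>\<^sup>+z. ennreal (p2 e) * ennreal (p3 z) * g (a, e, z) \<partial>lborel \<partial>lborel)"
      by (intro nn_integral_cong) (simp add: nn_integral_cmult[symmetric] mult.assoc)
    finally show "(\<integral>\<^sup>+e. \<integral>\<^sup>+z. g (a, e, z) \<partial>P3 \<partial>P2) = (\<integral>\<^sup>+e. \<integral>\<^sup>+z. ennreal (p2 e) * ennreal (p3 z) * g (a, e, z) \<partial>lborel \<partial>lborel)" .
  qed
  finally show ?thesis .
qed

lemma nn_integral_A_W_Y_iterated:
  assumes h[measurable]: "h \<in> borel_measurable (borel \<Otimes>\<^sub>M (borel \<Otimes>\<^sub>M borel))"
  shows "(\<integral>\<^sup>+\<omega>. h (A \<omega>, W \<omega>, Y \<omega>) \<partial>M) =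
    (\<integral>\<^sup>+a. \<integral>\<^sup>+w. \<integral>\<^sup>+y. K a w y * h (a, w, y) \<partial>lborel \<partial>lborel \<partial>law_A)"
proof -
  define g where "g = (\<lambda>(a, e, z). h (a, r*a + e, c*(r*a + e) + s*a + z))"
  have g[measurable]: "g \<in> borel_measurable (borel \<Otimes>\<^sub>M (borel \<Otimes>\<^sub>M borel))"
    unfolding g_def by measurable
  have "(\<integral>\<^sup>+\<omega>. h (A \<omega>, W \<omega>, Y \<omega>) \<partial>M) = (\<integral>\<^sup>+\<omega>. g (A \<omega>, XE \<omega>, E \<omega>) \<partial>M)"
    by (intro nn_integral_cong) (simp add: g_def W_eq Y_eq)
  also have "\<dots> = (\<integral>\<^sup>+a. \<integral>\<^sup>+e. \<integral>\<^sup>+z. ennreal (p2 e) * ennreal (p3 z) * g (a, e, z) \<partial>lborel \<partial>lborel \<partial>law_A)"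
    by (rule nn_integral_A_XE_E[OF g])
  also have "\<dots> = (\<integral>\<^sup>+a. \<integral>\<^sup>+w. \<integral>\<^sup>+y. K a w y * h (a, w, y) \<partial>lborel \<partial>lborel \<partial>law_A)"
  proof (rule nn_integral_cong)
    fix a :: real
    have inner: "(\<integral>\<^sup>+z. ennreal (p2 e) * ennreal (p3 z) * g (a, e, z) \<partial>lborel) =
      (\<integral>\<^sup>+y. ennreal (p2 e) * ennreal (p3 (y - c*(r*a+e) - s*a)) * h (a, r*a+e, y) \<partial>lborel)" for e
    proof -
      define t where "t = c*(r*a+e) + s*a"
      have "(\<integral>\<^sup>+y. ennreal (p2 e) * ennreal (p3 (y - c*(r*a+e) - s*a)) * h (a, r*a+e, y) \<partial>lborel)
        = (\<integral>\<^sup>+z. ennreal (p2 e) * ennreal (p3 ((t + z) - c*(r*a+e) - s*a)) * h (a, r*a+e, t + z) \<partial>lborel)"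
        by (rule nn_integral_lborel_translate[symmetric]) measurable
      also have "\<dots> = (\<integral>\<^sup>+z. ennreal (p2 e) * ennreal (p3 z) * g (a, e, z) \<partial>lborel)"
        by (intro nn_integral_cong) (simp add: g_def t_def algebra_simps)
      finally show ?thesis by simp
    qed
    have "(\<integral>\<^sup>+e. \<integral>\<^sup>+z. ennreal (p2 e) * ennreal (p3 z) * g (a, e, z) \<partial>lborel \<partial>lborel) =
      (\<integral>\<^sup>+e. \<integral>\<^sup>+y. ennreal (p2 e) * ennreal (p3 (y - c*(r*a+e) - s*a)) * h (a, r*a+e, y) \<partial>lborel \<partial>lborel)"
      by (intro nn_integral_cong inner)
    also have "\<dots> = (\<integral>\<^sup>+e. (\<lambda>w. \<integral>\<^sup>+y. ennreal (p2 (w - r*a)) * ennreal (p3 (y - c*w - s*a)) * h (a, w, y) \<partial>lborel) (r*a + e) \<partial>lborel)"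
      by (intro nn_integral_cong) simp
    also have "\<dots> = (\<integral>\<^sup>+w. \<integral>\<^sup>+y. ennreal (p2 (w - r*a)) * ennreal (p3 (y - c*w - s*a)) * h (a, w, y) \<partial>lborel \<partial>lborel)"
      by (rule nn_integral_lborel_translate) measurable
    also have "\<dots> = (\<integral>\<^sup>+w. \<integral>\<^sup>+y. K a w y * h (a, w, y) \<partial>lborel \<partial>lborel)"
      unfolding K_def using p2pos p3pos
      by (intro nn_integral_cong) (simp add: ennreal_mult less_imp_le)
    finally show "(\<integral>\<^sup>+e. \<integral>\<^sup>+z. ennreal (p2 e) * ennreal (p3 z) * g (a, e, z) \<partial>lborel \<partial>lborel) =
      (\<integral>\<^sup>+w. \<integral>\<^sup>+y. K a w y * h (a, w, y) \<partial>lborel \<partial>lborel)" .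
  qed
  finally show ?thesis .
qed

lemma nn_integral_A_W_Y:
  assumes h[measurable]: "h \<in> borel_measurable (borel \<Otimes>\<^sub>M (borel \<Otimes>\<^sub>M borel))"
  shows "(\<integral>\<^sup>+\<omega>. h (A \<omega>, W \<omega>, Y \<omega>) \<partial>M) =
    (\<integral>\<^sup>+y. \<integral>\<^sup>+a. \<integral>\<^sup>+w. K a w y * h (a, w, y) \<partial>lborel \<partial>law_A \<partial>lborel)"
proof -
  have "(\<integral>\<^sup>+\<omega>. h (A \<omega>, W \<omega>, Y \<omega>) \<partial>M) =
    (\<integral>\<^sup>+a. \<integral>\<^sup>+w. \<integral>\<^sup>+y. K a w y * h (a, w, y) \<partial>lborel \<partial>lborel \<partial>law_A)" by (rule nn_integral_A_W_Y_iterated[OF h])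
  also have "\<dots> = (\<integral>\<^sup>+a. \<integral>\<^sup>+y. \<integral>\<^sup>+w. K a w y * h (a, w, y) \<partial>lborel \<partial>lborel \<partial>law_A)"
  proof (rule nn_integral_cong)
    fix a
    show "(\<integral>\<^sup>+w. \<integral>\<^sup>+y. K a w y * h (a, w, y) \<partial>lborel \<partial>lborel) = (\<integral>\<^sup>+y. \<integral>\<^sup>+w. K a w y * h (a, w, y) \<partial>lborel \<partial>lborel)"
      by (rule lborel_pair.Fubini'[symmetric]) measurable
  qed
  also have "\<dots> = (\<integral>\<^sup>+y. \<integral>\<^sup>+a. \<integral>\<^sup>+w. K a w y * h (a, w, y) \<partial>lborel \<partial>law_A \<partial>lborel)"
    by (rule pair_sigma_finite.Fubini'[OF pair_sigma_finite_law_A_lborel, symmetric]) measurable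
  finally show ?thesis .
qed

text \<open>The density of Y on the event A \<in> T, W \<in> S; thus pY is the density of Y and
  cond_prob_AW T S y is the probability of A \<in> T, W \<in> S given Y = y.\<close>
definition rho :: "real set \<Rightarrow> real set \<Rightarrow> real \<Rightarrow> ennreal" where
  "rho T S y = (\<integral>\<^sup>+a. \<integral>\<^sup>+w. K a w y * indicator T a * indicator S w \<partial>lborel \<partial>law_A)"

definition pY :: "real \<Rightarrow> ennreal" where
  "pY y = rho UNIV UNIV y"

definition cond_prob_AW :: "real set \<Rightarrow> real set \<Rightarrow> real \<Rightarrow> real" where
  "cond_prob_AW T S y = enn2real (rho T S y) / enn2real (pY y)"

lemma rho_measurable[measurable]:
  assumes [measurable]: "T \<in> sets borel" "S \<in> sets borel"
  shows "rho T S \<in> borel_measurable borel"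
  unfolding rho_def by measurable

lemma pY_measurable[measurable]: "pY \<in> borel_measurable borel"
  unfolding pY_def by simp

lemma cond_prob_AW_measurable[measurable]:
  assumes [measurable]: "T \<in> sets borel" "S \<in> sets borel"
  shows "cond_prob_AW T S \<in> borel_measurable borel"
  unfolding cond_prob_AW_def by measurable

lemma pY_eq: "pY y = (\<integral>\<^sup>+a. \<integral>\<^sup>+w. K a w y \<partial>lborel \<partial>law_A)"
  unfolding pY_def rho_def by simp

lemma rho_le: "rho T S y \<le> pY y"
  unfolding pY_eq rho_def
  by (intro nn_integral_mono) (auto split: split_indicator)

lemma nn_integral_indicators_A_W_Y:
  assumes [measurable]: "T \<in> sets borel" "S \<in> sets borel" "R \<in> sets borel"
  shows "(\<integral>\<^sup>+\<omega>. indicator T (A \<omega>) * indicator S (W \<omega>) * indicator R (Y \<omega>) \<partial>M) =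
    (\<integral>\<^sup>+y. indicator R y * rho T S y \<partial>lborel)"
proof -
  have "(\<integral>\<^sup>+\<omega>. indicator T (A \<omega>) * indicator S (W \<omega>) * indicator R (Y \<omega>) \<partial>M) =
    (\<integral>\<^sup>+y. \<integral>\<^sup>+a. \<integral>\<^sup>+w. K a w y * (indicator T a * indicator S w * indicator R y) \<partial>lborel \<partial>law_A \<partial>lborel)"
    using nn_integral_A_W_Y[of "\<lambda>(a,w,y). indicator T a * indicator S w * indicator R y"] by simp
  also have "\<dots> = (\<integral>\<^sup>+y. indicator R y * rho T S y \<partial>lborel)"
  proof (rule nn_integral_cong)
    fix y
    have "(\<integral>\<^sup>+a. \<integral>\<^sup>+w. K a w y * (indicator T a * indicator S w * indicator R y) \<partial>lborel \<partial>law_A) =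
      (\<integral>\<^sup>+a. indicator R y * \<integral>\<^sup>+w. K a w y * indicator T a * indicator S w \<partial>lborel \<partial>law_A)"
      by (rule nn_integral_cong, subst nn_integral_cmult[symmetric]) (measurable, auto intro!: nn_integral_cong simp: ac_simps)
    also have "\<dots> = indicator R y * rho T S y"
      unfolding rho_def by (rule nn_integral_cmult) measurable
    finally show "(\<integral>\<^sup>+a. \<integral>\<^sup>+w. K a w y * (indicator T a * indicator S w * indicator R y) \<partial>lborel \<partial>law_A) =
      indicator R y * rho T S y" .
  qed
  finally show ?thesis .
qed

lemma nn_integral_Y:
  assumes [measurable]: "\<phi> \<in> borel_measurable borel"
  shows "(\<integral>\<^sup>+\<omega>. \<phi> (Y \<omega>) \<partial>M) = (\<integral>\<^sup>+y. \<phi> y * pY y \<partial>lborel)"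
proof -
  have "(\<integral>\<^sup>+\<omega>. \<phi> (Y \<omega>) \<partial>M) =
    (\<integral>\<^sup>+y. \<integral>\<^sup>+a. \<integral>\<^sup>+w. K a w y * \<phi> y \<partial>lborel \<partial>law_A \<partial>lborel)"
    using nn_integral_A_W_Y[of "\<lambda>(a,w,y). \<phi> y"] by simp
  also have "\<dots> = (\<integral>\<^sup>+y. \<phi> y * pY y \<partial>lborel)"
  proof (rule nn_integral_cong)
    fix y
    have "(\<integral>\<^sup>+a. \<integral>\<^sup>+w. K a w y * \<phi> y \<partial>lborel \<partial>law_A) = (\<integral>\<^sup>+a. \<phi> y * \<integral>\<^sup>+w. K a w y \<partial>lborel \<partial>law_A)"
      by (rule nn_integral_cong, subst nn_integral_cmult[symmetric]) (measurable, auto intro!: nn_integral_cong simp: ac_simps)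
    also have "\<dots> = \<phi> y * pY y"
      unfolding pY_eq by (rule nn_integral_cmult) measurable
    finally show "(\<integral>\<^sup>+a. \<integral>\<^sup>+w. K a w y * \<phi> y \<partial>lborel \<partial>law_A) = \<phi> y * pY y" .
  qed
  finally show ?thesis .
qed

lemma pY_integral: "(\<integral>\<^sup>+y. pY y \<partial>lborel) = 1"
  using nn_integral_Y[of "\<lambda>_. 1"] by (simp add: emeasure_space_1)

lemma AE_pY_finite: "AE y in lborel. pY y \<noteq> \<infinity>"
  by (rule nn_integral_noteq_infinite) (auto simp: pY_integral)

lemma K_pos: "K a w y > 0"
  unfolding K_def using p2pos p3pos by simp

lemma pY_pos: "pY y > 0"
proof -
  have inner: "(\<integral>\<^sup>+w. K a w y \<partial>lborel) > 0" for a
  proof (rule ccontr)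
    assume "\<not> (\<integral>\<^sup>+w. K a w y \<partial>lborel) > 0"
    then have "(\<integral>\<^sup>+w. K a w y \<partial>lborel) = 0" by (simp add: not_gr_zero)
    then have "AE w in lborel. K a w y = 0" by (subst nn_integral_0_iff_AE[symmetric]) measurable
    moreover have "\<And>w. K a w y \<noteq> 0" using K_pos[of a _ y] by (metis less_irrefl)
    ultimately have "AE (w::real) in lborel. False" by simp
    then show False using ae_filter_eq_bot_iff[of "lborel :: real measure"] by (simp add: eventually_False)
  qed
  show ?thesis
  proof (rule ccontr)
    assume "\<not> pY y > 0"
    then have "pY y = 0" by (simp add: not_gr_zero)
    then have "AE a in law_A. (\<integral>\<^sup>+w. K a w y \<partial>lborel) = 0"
      unfolding pY_eq by (subst nn_integral_0_iff_AE[symmetric]) measurable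
    moreover have "\<And>a. (\<integral>\<^sup>+w. K a w y \<partial>lborel) \<noteq> 0" using inner by (metis less_irrefl)
    ultimately have "AE a in law_A. False" by simp
    then show False by (simp add: law_A.AE_False)
  qed
qed

lemma cond_prob_AW_bounds: "0 \<le> cond_prob_AW T S y" "cond_prob_AW T S y \<le> 1"
proof -
  show "0 \<le> cond_prob_AW T S y" unfolding cond_prob_AW_def by simp
  show "cond_prob_AW T S y \<le> 1"
  proof (cases "pY y = \<infinity>")
    case True then show ?thesis unfolding cond_prob_AW_def by simp
  next
    case False
    have "enn2real (rho T S y) \<le> enn2real (pY y)" using enn2real_mono[OF rho_le[of T S y]] False by (simp add: less_top)
    show ?thesis
    proof (cases "enn2real (pY y) > 0")
      case True
      then show ?thesis unfolding cond_prob_AW_def using \<open>enn2real (rho T S y) \<le> enn2real (pY y)\<close> by (simp add: divide_le_eq_1)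
    next
      case False
      then have "enn2real (pY y) = 0" using enn2real_nonneg[of "pY y"] by linarith
      then show ?thesis unfolding cond_prob_AW_def by simp
    qed
  qed
qed

lemma cond_prob_AW_mult_pY:
  assumes "pY y \<noteq> \<infinity>"
  shows "ennreal (cond_prob_AW T S y) * pY y = rho T S y"
proof -
  have f: "rho T S y \<noteq> \<infinity>" using rho_le[of T S y] assms by (metis infinity_ennreal_def neq_top_trans)
  have p: "enn2real (pY y) > 0" using pY_pos[of y] assms by (simp add: enn2real_positive_iff less_top)
  have "ennreal (cond_prob_AW T S y) * pY y = ennreal (cond_prob_AW T S y) * ennreal (enn2real (pY y))"
    using assms by (simp add: ennreal_enn2real less_top)
  also have "\<dots> = ennreal (cond_prob_AW T S y * enn2real (pY y))"
    using cond_prob_AW_bounds by (simp add: ennreal_mult)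
  also have "\<dots> = ennreal (enn2real (rho T S y))"
    unfolding cond_prob_AW_def using p by simp
  also have "\<dots> = rho T S y" using f by (simp add: ennreal_enn2real less_top)
  finally show ?thesis .
qed

lemma subalgebra_gen_sigma_Y: "subalgebra M (gen_sigma M Y)"
  unfolding subalgebra_def gen_sigma_def
  using measurable_iff_sets[THEN iffD1, OF Y_measurable] by (simp add: space_vimage_algebra)

interpretation sigma_Y: finite_measure_subalgebra M "gen_sigma M Y"
  by unfold_locales (rule subalgebra_gen_sigma_Y)

lemma Y_measurable_gen_sigma_Y[measurable]: "Y \<in> measurable (gen_sigma M Y) borel"
  unfolding gen_sigma_def by (rule measurable_vimage_algebra1) simp

lemma real_cond_exp_indicators_A_W:
  assumes [measurable]: "T \<in> sets borel" "S \<in> sets borel"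
  shows "AE \<omega> in M. real_cond_exp M (gen_sigma M Y) (\<lambda>\<omega>. indicator T (A \<omega>) * indicator S (W \<omega>)) \<omega> = cond_prob_AW T S (Y \<omega>)"
proof (rule sigma_Y.real_cond_exp_charact)
  fix B assume "B \<in> sets (gen_sigma M Y)"
  then obtain R where R[measurable]: "R \<in> sets borel" and B: "B = Y -` R \<inter> space M"
    unfolding gen_sigma_def by (auto simp: sets_vimage_algebra2)
  have "(\<integral>x\<in>B. indicator T (A x) * indicator S (W x) \<partial>M) =
        (\<integral>x. (indicator R (Y x) :: real) * (indicator T (A x) * indicator S (W x)) \<partial>M)"
    unfolding set_lebesgue_integral_def B
    by (intro Bochner_Integration.integral_cong) (auto split: split_indicator)
  also have "\<dots> = (\<integral>x. indicator R (Y x) * cond_prob_AW T S (Y x) \<partial>M)"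
  proof (rule integral_eq_if_nn_integral_eq)
    show "(\<integral>\<^sup>+x. ennreal (indicator R (Y x) * (indicator T (A x) * indicator S (W x))) \<partial>M) =
      (\<integral>\<^sup>+x. ennreal (indicator R (Y x) * cond_prob_AW T S (Y x)) \<partial>M)"
    proof -
      have "(\<integral>\<^sup>+x. ennreal (indicator R (Y x) * (indicator T (A x) * indicator S (W x))) \<partial>M) =
        (\<integral>\<^sup>+x. indicator T (A x) * indicator S (W x) * indicator R (Y x) \<partial>M)"
        by (intro nn_integral_cong) (auto split: split_indicator)
      also have "\<dots> = (\<integral>\<^sup>+y. indicator R y * rho T S y \<partial>lborel)" by (rule nn_integral_indicators_A_W_Y) auto
      also have "\<dots> = (\<integral>\<^sup>+y. ennreal (indicator R y * cond_prob_AW T S y) * pY y \<partial>lborel)"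
      proof (rule nn_integral_cong_AE)
        show "AE y in lborel. indicator R y * rho T S y = ennreal (indicator R y * cond_prob_AW T S y) * pY y"
          using AE_pY_finite
        proof (rule eventually_mono)
          fix y assume "pY y \<noteq> \<infinity>"
          then show "indicator R y * rho T S y = ennreal (indicator R y * cond_prob_AW T S y) * pY y"
            using cond_prob_AW_mult_pY[of y T S] by (auto split: split_indicator)
        qed
      qed
      also have "\<dots> = (\<integral>\<^sup>+x. ennreal (indicator R (Y x) * cond_prob_AW T S (Y x)) \<partial>M)"
        by (rule nn_integral_Y[symmetric]) measurable
      finally show ?thesis .
    qed
  qed (auto simp: cond_prob_AW_bounds)
  also have "\<dots> = (\<integral>x\<in>B. cond_prob_AW T S (Y x) \<partial>M)"
    unfolding set_lebesgue_integral_def B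
    by (intro Bochner_Integration.integral_cong) (auto split: split_indicator)
  finally show "(\<integral>x\<in>B. indicator T (A x) * indicator S (W x) \<partial>M) = (\<integral>x\<in>B. cond_prob_AW T S (Y x) \<partial>M)" .
next
  show "integrable M (\<lambda>\<omega>. (indicator T (A \<omega>) :: real) * indicator S (W \<omega>))"
    by (intro integrable_const_bound[where B=1]) (auto split: split_indicator)
  show "integrable M (\<lambda>\<omega>. cond_prob_AW T S (Y \<omega>))"
    by (intro integrable_const_bound[where B=1]) (auto simp: cond_prob_AW_bounds)
  show "(\<lambda>\<omega>. cond_prob_AW T S (Y \<omega>)) \<in> borel_measurable (gen_sigma M Y)" by measurable
qed

lemma cond_indep_imp_cond_prob_AW_mult:
  assumes ci: "cond_indep M Yh A Y" and Yh: "\<And>\<omega>. \<omega> \<in> space M \<Longrightarrow> Yh \<omega> = \<beta> * W \<omega>" and b: "\<beta> \<noteq> 0"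
    and [measurable]: "T \<in> sets borel" "S \<in> sets borel"
  shows "AE \<omega> in M. cond_prob_AW T S (Y \<omega>) = cond_prob_AW UNIV S (Y \<omega>) * cond_prob_AW T UNIV (Y \<omega>)"
proof -
  have Yhm[measurable]: "Yh \<in> borel_measurable M"
    using measurable_cong[of M Yh "\<lambda>\<omega>. \<beta> * W \<omega>"] Yh by simp
  define S' where "S' = (\<lambda>u. u / \<beta>) -` S"
  have dm: "(\<lambda>u::real. u / \<beta>) \<in> borel_measurable borel" by simp
  have S'm[measurable]: "S' \<in> sets borel"
    using measurable_sets[OF dm \<open>S \<in> sets borel\<close>] unfolding S'_def by simp
  have ind: "indicator S' (Yh x) = indicator S (W x)" if "x \<in> space M" for x
    using Yh[OF that] b unfolding S'_def by (simp split: split_indicator)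
  from ci have "AE \<omega> in M.
          real_cond_exp M (gen_sigma M Y) (\<lambda>x. indicator S' (Yh x) * indicator T (A x)) \<omega> =
          real_cond_exp M (gen_sigma M Y) (\<lambda>x. indicator S' (Yh x)) \<omega> *
          real_cond_exp M (gen_sigma M Y) (\<lambda>x. indicator T (A x)) \<omega>"
    unfolding cond_indep_def using S'm by auto
  moreover have "AE \<omega> in M. real_cond_exp M (gen_sigma M Y) (\<lambda>x. indicator S' (Yh x) * indicator T (A x)) \<omega> =
      real_cond_exp M (gen_sigma M Y) (\<lambda>\<omega>. indicator T (A \<omega>) * indicator S (W \<omega>)) \<omega>"
    by (rule sigma_Y.real_cond_exp_cong) (auto simp: ind)
  moreover have "AE \<omega> in M. real_cond_exp M (gen_sigma M Y) (\<lambda>x. indicator S' (Yh x)) \<omega> =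
      real_cond_exp M (gen_sigma M Y) (\<lambda>\<omega>. indicator UNIV (A \<omega>) * indicator S (W \<omega>)) \<omega>"
    by (rule sigma_Y.real_cond_exp_cong) (auto simp: ind)
  moreover have "AE \<omega> in M. real_cond_exp M (gen_sigma M Y) (\<lambda>x. indicator T (A x)) \<omega> =
      real_cond_exp M (gen_sigma M Y) (\<lambda>\<omega>. indicator T (A \<omega>) * indicator UNIV (W \<omega>)) \<omega>"
    by (rule sigma_Y.real_cond_exp_cong) auto
  moreover have "AE \<omega> in M. real_cond_exp M (gen_sigma M Y) (\<lambda>\<omega>. indicator T (A \<omega>) * indicator S (W \<omega>)) \<omega> = cond_prob_AW T S (Y \<omega>)"
    by (rule real_cond_exp_indicators_A_W) auto
  moreover have "AE \<omega> in M. real_cond_exp M (gen_sigma M Y) (\<lambda>\<omega>. indicator UNIV (A \<omega>) * indicator S (W \<omega>)) \<omega> = cond_prob_AW UNIV S (Y \<omega>)"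
    by (rule real_cond_exp_indicators_A_W) auto
  moreover have "AE \<omega> in M. real_cond_exp M (gen_sigma M Y) (\<lambda>\<omega>. indicator T (A \<omega>) * indicator UNIV (W \<omega>)) \<omega> = cond_prob_AW T UNIV (Y \<omega>)"
    by (rule real_cond_exp_indicators_A_W) auto
  ultimately show ?thesis
    by eventually_elim metis
qed

lemma AE_lborel_if_AE_Y:
  assumes "AE \<omega> in M. P (Y \<omega>)" and [measurable]: "{y. \<not> P y} \<in> sets borel"
  shows "AE y in lborel. P y"
proof -
  define N where "N = {y. \<not> P y}"
  have [measurable]: "N \<in> sets borel" unfolding N_def by fact
  have "AE \<omega> in M. (indicator N (Y \<omega>) :: ennreal) = 0" using assms(1) by eventually_elim (simp add: N_def)
  then have "(\<integral>\<^sup>+\<omega>. indicator N (Y \<omega>) \<partial>M) = 0" by (simp add: nn_integral_0_iff_AE)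
  then have "(\<integral>\<^sup>+y. indicator N y * pY y \<partial>lborel) = 0" by (simp add: nn_integral_Y)
  then have "AE y in lborel. indicator N y * pY y = 0" by (simp add: nn_integral_0_iff_AE)
  then show ?thesis
  proof (rule eventually_mono)
    fix y assume "indicator N y * pY y = 0"
    then show "P y" using pY_pos[of y] unfolding N_def by (cases "P y") auto
  qed
qed

lemma cond_indep_imp_rho_mult:
  assumes ci: "cond_indep M Yh A Y" and Yh: "\<And>\<omega>. \<omega> \<in> space M \<Longrightarrow> Yh \<omega> = \<beta> * W \<omega>" and "\<beta> \<noteq> 0"
    and [measurable]: "T \<in> sets borel" "S \<in> sets borel"
  shows "AE y in lborel. pY y \<noteq> \<infinity> \<longrightarrow> rho T S y * pY y = rho UNIV S y * rho T UNIV y"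
proof -
  have "AE y in lborel. cond_prob_AW T S y = cond_prob_AW UNIV S y * cond_prob_AW T UNIV y"
    using cond_indep_imp_cond_prob_AW_mult[OF assms] by (rule AE_lborel_if_AE_Y) measurable
  then show ?thesis
  proof (rule eventually_mono, intro impI)
    fix y assume y: "cond_prob_AW T S y = cond_prob_AW UNIV S y * cond_prob_AW T UNIV y"
      and f: "pY y \<noteq> \<infinity>"
    have "rho T S y * pY y = ennreal (cond_prob_AW T S y) * pY y * pY y"
      using cond_prob_AW_mult_pY[OF f, of T S] by simp
    also have "\<dots> = (ennreal (cond_prob_AW UNIV S y) * pY y) * (ennreal (cond_prob_AW T UNIV y) * pY y)"
      unfolding y using cond_prob_AW_bounds by (simp add: ennreal_mult ac_simps)
    also have "\<dots> = rho UNIV S y * rho T UNIV y" using cond_prob_AW_mult_pY[OF f] by simp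
    finally show "rho T S y * pY y = rho UNIV S y * rho T UNIV y" .
  qed
qed

text \<open>The joint density of (W, Y), and the density of Y given A = a.\<close>
definition pWY :: "real \<Rightarrow> real \<Rightarrow> ennreal" where
  "pWY w y = (\<integral>\<^sup>+a. K a w y \<partial>law_A)"

definition pY_A :: "real \<Rightarrow> real \<Rightarrow> ennreal" where
  "pY_A a y = (\<integral>\<^sup>+w. K a w y \<partial>lborel)"

lemma pWY_measurable[measurable (raw)]:
  assumes "f \<in> borel_measurable N" "g \<in> borel_measurable N"
  shows "(\<lambda>x. pWY (f x) (g x)) \<in> borel_measurable N"
proof -
  have "(\<lambda>x. pWY (fst x) (snd x)) \<in> borel_measurable (borel \<Otimes>\<^sub>M borel)"
    unfolding pWY_def by measurable
  from measurable_compose[OF measurable_Pair[OF assms] this] show ?thesis by simp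
qed

lemma pY_A_measurable[measurable (raw)]:
  assumes "f \<in> borel_measurable N" "g \<in> borel_measurable N"
  shows "(\<lambda>x. pY_A (f x) (g x)) \<in> borel_measurable N"
proof -
  have "(\<lambda>x. pY_A (fst x) (snd x)) \<in> borel_measurable (borel \<Otimes>\<^sub>M borel)"
    unfolding pY_A_def by measurable
  from measurable_compose[OF measurable_Pair[OF assms] this] show ?thesis by simp
qed

lemma rho_eq_nn_integral_W:
  assumes [measurable]: "T \<in> sets borel" "S \<in> sets borel"
  shows "(\<integral>\<^sup>+w. (\<integral>\<^sup>+a. K a w y * indicator T a \<partial>law_A) * indicator S w \<partial>lborel) = rho T S y"
proof -
  have "(\<integral>\<^sup>+w. (\<integral>\<^sup>+a. K a w y * indicator T a \<partial>law_A) * indicator S w \<partial>lborel) =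
     (\<integral>\<^sup>+w. \<integral>\<^sup>+a. K a w y * indicator T a * indicator S w \<partial>law_A \<partial>lborel)"
    by (rule nn_integral_cong, rule nn_integral_multc[symmetric]) measurable
  also have "\<dots> = (\<integral>\<^sup>+a. \<integral>\<^sup>+w. K a w y * indicator T a * indicator S w \<partial>lborel \<partial>law_A)"
    by (rule pair_sigma_finite.Fubini'[OF pair_sigma_finite_law_A_lborel]) measurable
  finally show ?thesis unfolding rho_def .
qed

lemma rho_UNIV_eq_nn_integral_pWY:
  assumes [measurable]: "S \<in> sets borel"
  shows "(\<integral>\<^sup>+w. pWY w y * indicator S w \<partial>lborel) = rho UNIV S y"
  using rho_eq_nn_integral_W[of UNIV S y] unfolding pWY_def by simp

lemma rho_UNIV_eq_nn_integral_pY_A: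
  assumes [measurable]: "T \<in> sets borel"
  shows "(\<integral>\<^sup>+a. pY_A a y * indicator T a \<partial>law_A) = rho T UNIV y"
  unfolding rho_def pY_A_def
  by (rule nn_integral_cong, simp, rule nn_integral_multc[symmetric]) measurable

lemma pWY_integral: "(\<integral>\<^sup>+w. pWY w y \<partial>lborel) = pY y"
  using rho_UNIV_eq_nn_integral_pWY[of UNIV y] unfolding pY_def by simp

lemma AE_factorises_of_rho_mult:
  assumes fin: "pY y \<noteq> \<infinity>"
    and rho_mult: "\<And>q q'. q \<in> \<rat> \<Longrightarrow> q' \<in> \<rat> \<Longrightarrow>
      rho {q<..} {q'<..} y * pY y = rho UNIV {q'<..} y * rho {q<..} UNIV y"
  shows "AE w in lborel. AE a in law_A. pY y * K a w y = pWY w y * pY_A a y"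
proof -
  have rho_fin: "rho T S y \<noteq> \<infinity>" for T S
    using rho_le[of T S y] fin by (metis infinity_ennreal_def neq_top_trans)
  have "AE w in lborel. pY y * (\<integral>\<^sup>+a. K a w y * indicator {q<..} a \<partial>law_A) = rho {q<..} UNIV y * pWY w y"
    if "q \<in> \<rat>" for q
  proof (rule AE_eq_if_nn_integral_Rats_Ioi_eq)
    fix q' :: real assume "q' \<in> \<rat>"
    have "(\<integral>\<^sup>+w. pY y * (\<integral>\<^sup>+a. K a w y * indicator {q<..} a \<partial>law_A) * indicator {q'<..} w \<partial>lborel)
        = pY y * rho {q<..} {q'<..} y"
      by (subst rho_eq_nn_integral_W[symmetric], simp_all, subst nn_integral_cmult[symmetric])
        (measurable, simp add: mult.assoc)
    moreover have "(\<integral>\<^sup>+w. rho {q<..} UNIV y * pWY w y * indicator {q'<..} w \<partial>lborel)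
        = rho {q<..} UNIV y * rho UNIV {q'<..} y"
      by (subst rho_UNIV_eq_nn_integral_pWY[symmetric], simp, subst nn_integral_cmult[symmetric])
        (measurable, simp add: mult.assoc)
    ultimately show "(\<integral>\<^sup>+w. pY y * (\<integral>\<^sup>+a. K a w y * indicator {q<..} a \<partial>law_A) * indicator {q'<..} w \<partial>lborel)
        = (\<integral>\<^sup>+w. rho {q<..} UNIV y * pWY w y * indicator {q'<..} w \<partial>lborel)"
      "(\<integral>\<^sup>+w. pY y * (\<integral>\<^sup>+a. K a w y * indicator {q<..} a \<partial>law_A) * indicator {q'<..} w \<partial>lborel) \<noteq> \<infinity>"
      using rho_mult[OF \<open>q \<in> \<rat>\<close> \<open>q' \<in> \<rat>\<close>] fin rho_fin by (simp_all add: ac_simps ennreal_mult_eq_top_iff)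
  qed (auto simp: lborel.sigma_finite_measure_axioms)
  then have "AE w in lborel. \<forall>q\<in>\<rat>.
      pY y * (\<integral>\<^sup>+a. K a w y * indicator {q<..} a \<partial>law_A) = rho {q<..} UNIV y * pWY w y"
    by (rule AE_ball_countable'[OF _ countable_rat])
  moreover have "AE w in lborel. pWY w y \<noteq> \<infinity>"
    using fin by (intro nn_integral_noteq_infinite) (auto simp: pWY_integral infinity_ennreal_def)
  ultimately show ?thesis
  proof eventually_elim
    case (elim w)
    show "AE a in law_A. pY y * K a w y = pWY w y * pY_A a y"
    proof (rule AE_eq_if_nn_integral_Rats_Ioi_eq)
      fix q :: real assume "q \<in> \<rat>"
      have "(\<integral>\<^sup>+a. pY y * K a w y * indicator {q<..} a \<partial>law_A)
          = pY y * (\<integral>\<^sup>+a. K a w y * indicator {q<..} a \<partial>law_A)"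
        by (subst nn_integral_cmult[symmetric]) (measurable, simp add: mult.assoc)
      also have "\<dots> = rho {q<..} UNIV y * pWY w y" using elim \<open>q \<in> \<rat>\<close> by blast
      finally have "(\<integral>\<^sup>+a. pY y * K a w y * indicator {q<..} a \<partial>law_A) = rho {q<..} UNIV y * pWY w y" .
      moreover have "(\<integral>\<^sup>+a. pWY w y * pY_A a y * indicator {q<..} a \<partial>law_A) = pWY w y * rho {q<..} UNIV y"
        by (subst rho_UNIV_eq_nn_integral_pY_A[symmetric], simp, subst nn_integral_cmult[symmetric])
          (measurable, simp add: mult.assoc)
      ultimately show "(\<integral>\<^sup>+a. pY y * K a w y * indicator {q<..} a \<partial>law_A) =
          (\<integral>\<^sup>+a. pWY w y * pY_A a y * indicator {q<..} a \<partial>law_A)"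
        "(\<integral>\<^sup>+a. pY y * K a w y * indicator {q<..} a \<partial>law_A) \<noteq> \<infinity>"
        using elim rho_fin by (simp_all add: ac_simps ennreal_mult_eq_top_iff)
    qed (auto simp: law_A.sigma_finite_measure_axioms)
  qed
qed

definition dens :: "real \<Rightarrow> real \<Rightarrow> real \<Rightarrow> real" where
  "dens a w y = p2 (w - r*a) * p3 (y - c*w - s*a)"

text \<open>The conditional density K a w y / pY y of (A, W) given Y = y is the product of the
  conditional densities pWY w y / pY y of W and pY_A a y / pY y of A.\<close>
definition factorises :: "real \<Rightarrow> real \<Rightarrow> real \<Rightarrow> bool" where
  "factorises a w y \<longleftrightarrow> pY y * K a w y = pWY w y * pY_A a y"

lemma K_eq_dens: "K a w y = ennreal (dens a w y)" unfolding K_def dens_def ..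
lemma dens_pos: "dens a w y > 0" unfolding dens_def using p2pos p3pos by simp

lemma dens_cross_eq_of_factorises:
  assumes f: "pY y \<noteq> \<infinity>" and g: "factorises a1 w1 y" "factorises a2 w2 y" "factorises a2 w1 y" "factorises a1 w2 y"
  shows "dens a1 w1 y * dens a2 w2 y = dens a2 w1 y * dens a1 w2 y"
proof -
  define u where "u = pY y"
  have u0: "u \<noteq> 0" unfolding u_def using pY_pos[of y] by simp
  have ut: "u \<noteq> top" using f unfolding u_def by simp
  have "(u * u) * (K a1 w1 y * K a2 w2 y) = (u * K a1 w1 y) * (u * K a2 w2 y)" by (simp add: ac_simps)
  also have "\<dots> = (pWY w1 y * pY_A a1 y) * (pWY w2 y * pY_A a2 y)" using g(1,2) unfolding factorises_def u_def by simp
  also have "\<dots> = (pWY w1 y * pY_A a2 y) * (pWY w2 y * pY_A a1 y)" by (simp add: ac_simps)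
  also have "\<dots> = (u * K a2 w1 y) * (u * K a1 w2 y)" using g(3,4) unfolding factorises_def u_def by simp
  also have "\<dots> = (u * u) * (K a2 w1 y * K a1 w2 y)" by (simp add: ac_simps)
  finally have e: "(u * u) * (K a1 w1 y * K a2 w2 y) = (u * u) * (K a2 w1 y * K a1 w2 y)" .
  have uu0: "u * u \<noteq> 0" using u0 by simp
  have uut: "u * u \<noteq> top" using ut by (simp add: ennreal_mult_eq_top_iff)
  have "K a1 w1 y * K a2 w2 y = K a2 w1 y * K a1 w2 y"
    using e uu0 uut by (simp add: ennreal_mult_cancel_left)
  then have "ennreal (dens a1 w1 y * dens a2 w2 y) = ennreal (dens a2 w1 y * dens a1 w2 y)"
    unfolding K_eq_dens using dens_pos by (simp add: ennreal_mult[symmetric] less_imp_le)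
  then show ?thesis using dens_pos by (simp add: less_imp_le)
qed

lemma p2_continuous[continuous_intros]: "continuous_on S f \<Longrightarrow> continuous_on S (\<lambda>x. p2 (f x))"
  by (rule continuous_on_compose2[OF continuous_p2]) auto
lemma p3_continuous[continuous_intros]: "continuous_on S f \<Longrightarrow> continuous_on S (\<lambda>x. p3 (f x))"
  by (rule continuous_on_compose2[OF continuous_p3]) auto

lemma dens_cross_eq_of_AE:
  assumes ae: "AE y in lborel. AE w1 in lborel. AE w2 in lborel. dens a1 w1 y * dens a2 w2 y = dens a2 w1 y * dens a1 w2 y"
  shows "dens a1 w1 y * dens a2 w2 y = dens a2 w1 y * dens a1 w2 y"
proof -
  have s1: "AE y in lborel. AE w1 in lborel. \<forall>w2. dens a1 w1 y * dens a2 w2 y = dens a2 w1 y * dens a1 w2 y"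
    using ae
  proof (rule eventually_mono)
    fix y assume "AE w1 in lborel. AE w2 in lborel. dens a1 w1 y * dens a2 w2 y = dens a2 w1 y * dens a1 w2 y"
    then show "AE w1 in lborel. \<forall>w2. dens a1 w1 y * dens a2 w2 y = dens a2 w1 y * dens a1 w2 y"
    proof (rule eventually_mono)
      fix w1 assume h: "AE w2 in lborel. dens a1 w1 y * dens a2 w2 y = dens a2 w1 y * dens a1 w2 y"
      show "\<forall>w2. dens a1 w1 y * dens a2 w2 y = dens a2 w1 y * dens a1 w2 y"
      proof
        fix w2 show "dens a1 w1 y * dens a2 w2 y = dens a2 w1 y * dens a1 w2 y"
          by (rule AE_lborel_eq_imp_eq_continuous[OF h]) (unfold dens_def, intro continuous_intros, intro continuous_intros)
      qed
    qed
  qed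
  have s2: "AE y in lborel. \<forall>w1 w2. dens a1 w1 y * dens a2 w2 y = dens a2 w1 y * dens a1 w2 y"
    using s1
  proof (rule eventually_mono)
    fix y assume h: "AE w1 in lborel. \<forall>w2. dens a1 w1 y * dens a2 w2 y = dens a2 w1 y * dens a1 w2 y"
    show "\<forall>w1 w2. dens a1 w1 y * dens a2 w2 y = dens a2 w1 y * dens a1 w2 y"
    proof (intro allI)
      fix w1 w2
      have "AE w1 in lborel. dens a1 w1 y * dens a2 w2 y = dens a2 w1 y * dens a1 w2 y"
        using h by (rule eventually_mono) blast
      then show "dens a1 w1 y * dens a2 w2 y = dens a2 w1 y * dens a1 w2 y"
        by (rule AE_lborel_eq_imp_eq_continuous) (unfold dens_def, intro continuous_intros, intro continuous_intros)
    qed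
  qed
  have "AE y in lborel. dens a1 w1 y * dens a2 w2 y = dens a2 w1 y * dens a1 w2 y"
    using s2 by (rule eventually_mono) blast
  then show ?thesis
    by (rule AE_lborel_eq_imp_eq_continuous) (unfold dens_def, intro continuous_intros, intro continuous_intros)
qed

lemma cond_indep_imp_AE_factorises:
  assumes ci: "cond_indep M Yh A Y" and Yh: "\<And>\<omega>. \<omega> \<in> space M \<Longrightarrow> Yh \<omega> = \<beta> * W \<omega>" and b: "\<beta> \<noteq> 0"
  shows "AE y in lborel. pY y \<noteq> \<infinity> \<and> (AE w in lborel. AE a in law_A. factorises a w y)"
proof -
  have rho_mult_Rats: "AE y in lborel. \<forall>q\<in>\<rat>. \<forall>q'\<in>\<rat>. pY y \<noteq> \<infinity> \<longrightarrow>
      rho {q<..} {q'<..} y * pY y = rho UNIV {q'<..} y * rho {q<..} UNIV y"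
  proof (rule AE_ball_countable'[OF _ countable_rat])
    fix q :: real assume q: "q \<in> \<rat>"
    show "AE y in lborel. \<forall>q'\<in>\<rat>. pY y \<noteq> \<infinity> \<longrightarrow>
      rho {q<..} {q'<..} y * pY y = rho UNIV {q'<..} y * rho {q<..} UNIV y"
    proof (rule AE_ball_countable'[OF _ countable_rat])
      fix q' :: real assume "q' \<in> \<rat>"
      show "AE y in lborel. pY y \<noteq> \<infinity> \<longrightarrow> rho {q<..} {q'<..} y * pY y = rho UNIV {q'<..} y * rho {q<..} UNIV y"
        by (rule cond_indep_imp_rho_mult[OF ci Yh b]) auto
    qed
  qed
  show ?thesis
    using rho_mult_Rats AE_pY_finite
  proof eventually_elim
    case (elim y)
    then have f: "pY y \<noteq> \<infinity>" by simp
    have "AE w in lborel. AE a in law_A. pY y * K a w y = pWY w y * pY_A a y"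
      by (rule AE_factorises_of_rho_mult[OF f]) (use elim f in auto)
    then show ?case using f unfolding factorises_def by simp
  qed
qed

lemma AE_law_A_AE_factorises:
  assumes "AE y in lborel. pY y \<noteq> \<infinity> \<and> (AE w in lborel. AE a in law_A. factorises a w y)"
  shows "AE a in law_A. AE y in lborel. pY y \<noteq> \<infinity> \<and> (AE w in lborel. factorises a w y)"
proof -
  have AE_y_AE_a: "AE y in lborel. AE a in law_A. pY y \<noteq> \<infinity> \<and> (AE w in lborel. factorises a w y)"
    using assms
  proof (rule eventually_mono)
    fix y assume h: "pY y \<noteq> \<infinity> \<and> (AE w in lborel. AE a in law_A. factorises a w y)"
    have m: "{x \<in> space (lborel \<Otimes>\<^sub>M law_A). factorises (snd x) (fst x) y} \<in> sets (lborel \<Otimes>\<^sub>M law_A)"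
      unfolding factorises_def by measurable
    have "AE a in law_A. AE w in lborel. factorises a w y"
      using h pair_sigma_finite.AE_commute[OF pair_sigma_finite_lborel_law_A m] by simp
    then show "AE a in law_A. pY y \<noteq> \<infinity> \<and> (AE w in lborel. factorises a w y)"
    proof (rule eventually_mono)
      fix a assume "AE w in lborel. factorises a w y"
      then show "pY y \<noteq> \<infinity> \<and> (AE w in lborel. factorises a w y)" using h by simp
    qed
  qed
  have pred_measurable: "{x \<in> space (lborel \<Otimes>\<^sub>M law_A). pY (fst x) \<noteq> \<infinity> \<and> (AE w in lborel. factorises (snd x) w (fst x))}
      \<in> sets (lborel \<Otimes>\<^sub>M law_A)"
  proof -
    have a: "{x \<in> space (lborel \<Otimes>\<^sub>M law_A). pY (fst x) \<noteq> \<infinity>} \<in> sets (lborel \<Otimes>\<^sub>M law_A)" by measurable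
    have p: "{z \<in> space ((lborel \<Otimes>\<^sub>M law_A) \<Otimes>\<^sub>M lborel). factorises (snd (fst z)) (snd z) (fst (fst z))}
        \<in> sets ((lborel \<Otimes>\<^sub>M law_A) \<Otimes>\<^sub>M lborel)"
      unfolding factorises_def by measurable
    have AE_w_measurable: "{x \<in> space (lborel \<Otimes>\<^sub>M law_A). AE w in lborel. factorises (snd x) w (fst x)} \<in> sets (lborel \<Otimes>\<^sub>M law_A)"
      using sets_Collect_AE_pair[OF lborel.sigma_finite_measure_axioms p] by simp
    have "{x \<in> space (lborel \<Otimes>\<^sub>M law_A). pY (fst x) \<noteq> \<infinity> \<and> (AE w in lborel. factorises (snd x) w (fst x))} =
      {x \<in> space (lborel \<Otimes>\<^sub>M law_A). pY (fst x) \<noteq> \<infinity>} \<inter> {x \<in> space (lborel \<Otimes>\<^sub>M law_A). AE w in lborel. factorises (snd x) w (fst x)}"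
      by auto
    then show ?thesis using a AE_w_measurable by simp
  qed
  show ?thesis
    using AE_y_AE_a pair_sigma_finite.AE_commute[OF pair_sigma_finite_lborel_law_A pred_measurable] by simp
qed

lemma cond_indep_imp_dens_cross_eq:
  assumes ci: "cond_indep M Yh A Y" and Yh: "\<And>\<omega>. \<omega> \<in> space M \<Longrightarrow> Yh \<omega> = \<beta> * W \<omega>" and b: "\<beta> \<noteq> 0"
  shows "AE a1 in law_A. AE a2 in law_A. \<forall>y w1 w2. dens a1 w1 y * dens a2 w2 y = dens a2 w1 y * dens a1 w2 y"
proof -
  note AE_a_AE_y = AE_law_A_AE_factorises[OF cond_indep_imp_AE_factorises[OF ci Yh b]]
  show ?thesis using AE_a_AE_y
  proof (rule eventually_mono)
    fix a1 assume h1: "AE y in lborel. pY y \<noteq> \<infinity> \<and> (AE w in lborel. factorises a1 w y)"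
    show "AE a2 in law_A. \<forall>y w1 w2. dens a1 w1 y * dens a2 w2 y = dens a2 w1 y * dens a1 w2 y" using AE_a_AE_y
    proof (rule eventually_mono)
      fix a2 assume h2: "AE y in lborel. pY y \<noteq> \<infinity> \<and> (AE w in lborel. factorises a2 w y)"
      have "AE y in lborel. AE w1 in lborel. AE w2 in lborel. dens a1 w1 y * dens a2 w2 y = dens a2 w1 y * dens a1 w2 y"
        using h1 h2
      proof eventually_elim
        case (elim y)
        then have f: "pY y \<noteq> \<infinity>" and g1: "AE w in lborel. factorises a1 w y" and g2: "AE w in lborel. factorises a2 w y" by auto
        show ?case using g1 g2
        proof eventually_elim
          case (elim w1)
          then have e1: "factorises a1 w1 y" "factorises a2 w1 y" by auto
          show ?case using g1 g2
          proof eventually_elim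
            case (elim w2)
            then show ?case using dens_cross_eq_of_factorises[OF f e1(1)] e1(2) by blast
          qed
        qed
      qed
      then show "\<forall>y w1 w2. dens a1 w1 y * dens a2 w2 y = dens a2 w1 y * dens a1 w2 y" using dens_cross_eq_of_AE by blast
    qed
  qed
qed

lemma emeasure_law_A_singleton:
  assumes "distributed M lborel A pA"
  shows "emeasure law_A {x} = 0"
proof -
  have "law_A = distr M lborel A" unfolding law_A_def by (rule distr_cong) auto
  then have "law_A = density lborel pA" using distributed_distr_eq_density[OF assms] by simp
  moreover have "AE y in lborel. y \<in> {x} \<longrightarrow> pA y = 0"
    using AE_lborel_singleton[of x] by (rule eventually_mono) simp
  then have "{x} \<in> null_sets (density lborel pA)"
    using null_sets_density_iff[OF distributed_borel_measurable[OF assms]] by simp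
  ultimately show ?thesis by auto
qed

lemma cond_indep_imp_log_densities_quadratic:
  assumes ci: "cond_indep M Yh A Y" and Yh: "\<And>\<omega>. \<omega> \<in> space M \<Longrightarrow> Yh \<omega> = \<beta> * W \<omega>" and "\<beta> \<noteq> 0"
    and "distributed M lborel A pA"
    and smooth2: "thrice_differentiable (\<lambda>x. ln (p2 x))"
    and smooth3: "thrice_differentiable (\<lambda>x. ln (p3 x))"
    and "r \<noteq> 0 \<or> s \<noteq> 0"
  shows "quadratic_fun 0 (\<lambda>x. ln (p2 x)) \<or> quadratic_fun 0 (\<lambda>x. ln (p3 x)) \<or>
    (\<exists>l2 l3. quadratic_fun l2 (\<lambda>x. ln (p2 x)) \<and> quadratic_fun l3 (\<lambda>x. ln (p3 x)))"
proof -
  define f2 where "f2 = (\<lambda>x. ln (p2 x))"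
  define f3 where "f3 = (\<lambda>x. ln (p3 x))"
  note d2 = thrice_differentiableD[OF smooth2, folded f2_def]
  note d3 = thrice_differentiableD[OF smooth3, folded f3_def]
  have "a1 - a2 \<in> increment_set f2 f3 r s c"
    if cross: "\<forall>y w1 w2. dens a1 w1 y * dens a2 w2 y = dens a2 w1 y * dens a1 w2 y" for a1 a2
  proof -
    have "f2 (w1 - r*a1) + f3 (y - c*w1 - s*a1) + (f2 (w2 - r*a2) + f3 (y - c*w2 - s*a2))
       = f2 (w1 - r*a2) + f3 (y - c*w1 - s*a2) + (f2 (w2 - r*a1) + f3 (y - c*w2 - s*a1))" for y w1 w2
    proof -
      have "dens a1 w1 y * dens a2 w2 y = dens a2 w1 y * dens a1 w2 y" using cross by blast
      then have "ln (dens a1 w1 y * dens a2 w2 y) = ln (dens a2 w1 y * dens a1 w2 y)" by simp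
      then show ?thesis using p2pos p3pos
        by (simp add: dens_def f2_def f3_def ln_mult_pos zero_less_mult_iff)
    qed
    then show ?thesis
      unfolding increment_set_def using deriv_increment_identity[OF d2(1) d3(1)] by blast
  qed
  then have "AE a1 in law_A. AE a2 in law_A. a1 - a2 \<in> increment_set f2 f3 r s c"
    using cond_indep_imp_dens_cross_eq[OF ci Yh \<open>\<beta> \<noteq> 0\<close>] by (auto elim!: eventually_mono)
  then have "increment_set f2 f3 r s c = UNIV"
    using law_A.prob_space_axioms emeasure_law_A_singleton[OF \<open>distributed M lborel A pA\<close>]
      zero_in_increment_set increment_set_add increment_set_uminus
      closed_increment_set[OF differentiable_everywhere_imp_continuous_on[OF d2(2)]
        differentiable_everywhere_imp_continuous_on[OF d3(2)]]
    by (intro closed_additive_subgroup_eq_UNIV_if_AE_differences) auto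
  then show ?thesis
    using quadratic_if_increment_set_UNIV[OF d2 d3 c0 \<open>r \<noteq> 0 \<or> s \<noteq> 0\<close>]
    unfolding f2_def f3_def by blast
qed

end

lemma (in prob_space) distr_A_EX_E_eq_pair_measure:
  fixes A E_X E_H E_Y E :: "'a \<Rightarrow> real"
  assumes indep: "indep_vars (\<lambda>_. borel)
           (\<lambda>i::nat. (if i = 0 then A else if i = 1 then E_X else if i = 2 then E_H else E_Y)) {0, 1, 2, 3}"
    and E: "\<And>\<omega>. \<omega> \<in> space M \<Longrightarrow> E \<omega> = E_Y \<omega> + d * E_H \<omega>"
    and EX_density: "distributed M lborel E_X (\<lambda>x. ennreal (p_EX x))"
    and E_density: "distributed M lborel E (\<lambda>x. ennreal (pE x))"
  shows "distr M (borel \<Otimes>\<^sub>M (borel \<Otimes>\<^sub>M borel)) (\<lambda>\<omega>. (A \<omega>, E_X \<omega>, E \<omega>)) =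
    distr M borel A \<Otimes>\<^sub>M (density lborel (\<lambda>x. ennreal (p_EX x)) \<Otimes>\<^sub>M density lborel (\<lambda>x. ennreal (pE x)))"
proof -
  define Xf where "Xf = (\<lambda>i::nat. (if i = 0 then A else if i = 1 then E_X else if i = 2 then E_H else E_Y))"
  have ind: "indep_vars (\<lambda>_. borel) Xf {0, 1, 2, 3}" using indep unfolding Xf_def .
  have component: "(\<lambda>f. f i) \<in> measurable (PiM I (\<lambda>_. borel)) (borel :: real measure)" if "i \<in> I" for i :: nat and I
    using that by (rule measurable_component_singleton)
  have "distr M (borel \<Otimes>\<^sub>M (borel \<Otimes>\<^sub>M borel)) (\<lambda>\<omega>. (A \<omega>, E_X \<omega>, E \<omega>)) =
      distr M (borel \<Otimes>\<^sub>M (borel \<Otimes>\<^sub>M borel)) (\<lambda>\<omega>. (A \<omega>, E_X \<omega>, E_Y \<omega> + d * E_H \<omega>))"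
    by (rule distr_cong) (auto simp: E)
  also have "\<dots> = distr M borel A \<Otimes>\<^sub>M distr M (borel \<Otimes>\<^sub>M borel) (\<lambda>\<omega>. (E_X \<omega>, E_Y \<omega> + d * E_H \<omega>))"
  proof -
    have "(\<lambda>g. (g 1, g 3 + d * g 2)) \<in> measurable (PiM {1::nat, 2, 3} (\<lambda>_. borel)) (borel \<Otimes>\<^sub>M borel)"
      using component[of 1 "{1, 2, 3}"] component[of 2 "{1, 2, 3}"] component[of 3 "{1, 2, 3}"] by measurable
    from indep_vars_distr_pair_restrict[OF ind _ _ _ component[of 0 "{0}"] this]
    show ?thesis by (simp add: Xf_def)
  qed
  also have "distr M (borel \<Otimes>\<^sub>M borel) (\<lambda>\<omega>. (E_X \<omega>, E_Y \<omega> + d * E_H \<omega>)) =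
      distr M borel E_X \<Otimes>\<^sub>M distr M borel (\<lambda>\<omega>. E_Y \<omega> + d * E_H \<omega>)"
  proof -
    have "(\<lambda>g. g 3 + d * g 2) \<in> measurable (PiM {2::nat, 3} (\<lambda>_. borel)) borel"
      using component[of 2 "{2, 3}"] component[of 3 "{2, 3}"] by measurable
    from indep_vars_distr_pair_restrict[OF ind _ _ _ component[of 1 "{1}"] this]
    show ?thesis by (simp add: Xf_def)
  qed
  also have "distr M borel E_X = distr M lborel E_X"
    by (rule distr_cong) auto
  also have "\<dots> = density lborel (\<lambda>x. ennreal (p_EX x))"
    by (rule distributed_distr_eq_density[OF EX_density])
  also have "distr M borel (\<lambda>\<omega>. E_Y \<omega> + d * E_H \<omega>) = distr M lborel E"
    by (rule distr_cong) (auto simp: E)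
  also have "\<dots> = density lborel (\<lambda>x. ennreal (pE x))"
    by (rule distributed_distr_eq_density[OF E_density])
  finally show ?thesis .
qed

theorem theorem1:
  fixes M :: "'a measure"
    and A E_X E_H E_Y X H Y E Yhat :: "'a \<Rightarrow> real"
    and pA :: "real \<Rightarrow> ennreal"
    and p_EX pE :: "real \<Rightarrow> real"
    and q b c d \<alpha> \<beta> :: real
  assumes "prob_space M"
    and "prob_space.indep_vars M (\<lambda>_. borel)
           (\<lambda>i::nat. (if i = 0 then A else if i = 1 then E_X else if i = 2 then E_H else E_Y))
           {0, 1, 2, 3}"
    and "\<And>\<omega>. \<omega> \<in> space M \<Longrightarrow> X \<omega> = q * A \<omega> + E_X \<omega>"
    and "\<And>\<omega>. \<omega> \<in> space M \<Longrightarrow> H \<omega> = b * A \<omega> + E_H \<omega>"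
    and "\<And>\<omega>. \<omega> \<in> space M \<Longrightarrow> Y \<omega> = c * X \<omega> + d * H \<omega> + E_Y \<omega>"
    and "\<And>\<omega>. \<omega> \<in> space M \<Longrightarrow> E \<omega> = E_Y \<omega> + d * E_H \<omega>"
    and "\<And>\<omega>. \<omega> \<in> space M \<Longrightarrow> Yhat \<omega> = \<alpha> * A \<omega> + \<beta> * X \<omega>"
    and "\<beta> \<noteq> 0"
    and "c \<noteq> 0"
    and "q * c + b * d \<noteq> 0"
    and "distributed M lborel A pA"
    and "distributed M lborel E_X (\<lambda>x. ennreal (p_EX x))"
    and "distributed M lborel E (\<lambda>x. ennreal (pE x))"
    and "\<And>x. p_EX x > 0"
    and "\<And>x. pE x > 0"
    and "thrice_differentiable (\<lambda>x. ln (p_EX x))"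
    and "thrice_differentiable (\<lambda>x. ln (pE x))"
    and "\<not> (gaussian_rv M E_X \<and> gaussian_rv M E)"
  shows "\<not> cond_indep M Yhat A Y"
proof
  assume ci: "cond_indep M Yhat A Y"
  interpret prob_space M by fact
  define r where "r = (\<alpha> + \<beta> * q) / \<beta>"
  define s where "s = q * c + b * d - c * r"
  define W where "W = (\<lambda>\<omega>. r * A \<omega> + E_X \<omega>)"
  have "continuous_on UNIV p_EX" "continuous_on UNIV pE"
    using continuous_on_if_ln_differentiable[OF assms(14) thrice_differentiableD(1)[OF assms(16)]]
      continuous_on_if_ln_differentiable[OF assms(15) thrice_differentiableD(1)[OF assms(17)]]
    by blast+
  moreover have "A \<in> borel_measurable M"
    using distributed_measurable[OF assms(11)] by (simp add: measurable_cong_sets[OF refl sets_lborel])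
  moreover have "\<And>\<omega>. \<omega> \<in> space M \<Longrightarrow> Y \<omega> = c * W \<omega> + s * A \<omega> + E \<omega>"
    using assms(3-6) by (simp add: W_def s_def algebra_simps)
  ultimately interpret noise_model M A E_X E W Y p_EX pE r s c
    using distr_A_EX_E_eq_pair_measure[OF assms(2,6,12,13)] assms(9,12-15)
    by unfold_locales (auto simp: W_def)
  have "\<And>\<omega>. \<omega> \<in> space M \<Longrightarrow> Yhat \<omega> = \<beta> * W \<omega>"
    using assms(3,7,8) by (simp add: W_def r_def field_simps)
  moreover have "r \<noteq> 0 \<or> s \<noteq> 0" using assms(10) by (auto simp: s_def)
  ultimately have "quadratic_fun 0 (\<lambda>x. ln (p_EX x)) \<or> quadratic_fun 0 (\<lambda>x. ln (pE x)) \<or>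
      (\<exists>l2 l3. quadratic_fun l2 (\<lambda>x. ln (p_EX x)) \<and> quadratic_fun l3 (\<lambda>x. ln (pE x)))"
    using cond_indep_imp_log_densities_quadratic[OF ci _ assms(8,11,16,17)] by blast
  then show False
    using quadratic_log_density_gaussian[OF assms(1,12,14)] quadratic_log_density_gaussian[OF assms(1,13,15)]
      assms(18) by blast
qed

end
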